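(* Let $U:\mathbb{R}^n\to\mathbb{R}$, $\beta>0$, $G_h:\mathbb{R}^n\to\mathbb{R}^n$, $B_h:\mathbb{R}^n\to\mathbb{R}^{n\times n}$, $M_h=B_hB_h^T$, $B:\mathbb{R}^n\to\mathbb{R}^{n\times n}$. Assume: the first two derivatives of $U$ are bounded; $G_h$ and its first derivative are bounded for $h$ sufficiently small; $B_h$, its inverse, and its first and second derivatives are bounded for $h$ sufficiently small, and there is a bounded matrix-valued $C(x)$ with bounded first derivative such that $B_h(x)B_h(x)^T=B(x)B(x)^T+C(x)h^{1/2}$. Let $\alpha_h(X_0,\xi)$ be the acceptance probability and $\tilde\alpha_h(X_0,\xi)$ its approximation, as defined in the context. Then there is $C>0$ such that $$\mathbb{E}|\alpha_h(X_0,\xi)-\tilde\alpha_h(X_0,\xi)|\le Ch$$ for all $X_0\in\mathbb{R}^n$ (and $h$ sufficiently small).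
   Context: $\xi\in\mathbb{R}^n$ is Gaussian with mean zero and covariance $\beta^{-1}I$. Given $X_0$: $\tilde X_1=X_0+\sqrt{h/2}\,B_h(X_0)\xi$, $X_1^\star=\tilde X_1+hG_h(\tilde X_1)+(\tilde X_1-X_0)$, $\eta$ solves $B_h(X_1^\star)\eta=B_h(X_0)\xi+\sqrt{2h}\,G_h(\tilde X_1)$, and $$\alpha_h(X_0,\xi)=\min\Big(1,\frac{\det B_h(X_0)}{\det B_h(X_1^\star)}\exp\Big(-\beta\Big[\tfrac{|\eta|^2}{2}-\tfrac{|\xi|^2}{2}+U(X_1^\star)-U(X_0)\Big]\Big)\Big).$$ Notation: for $u,v,w\in\mathbb{R}^n$, $DM_h(x)(u)$ is the matrix with entries $\sum_k\frac{\partial (M_h)_{ij}}{\partial x_k}(x)u_k$, and $DM_h(x)(u,v,w)=\sum_{i,j,k}\frac{\partial (M_h)_{ij}}{\partial x_k}(x)u_kv_jw_i$. Define $$\Gamma_h(x,\xi)=\sqrt{2h}\,(DU(x)+M_h(x)^{-1}G_h(x))^TB_h(x)\xi+\sqrt{2h}\,\tfrac{\beta^{-1}}{2}\operatorname{trace}\big(M_h(x)^{-1}DM_h(x)(B_h(x)\xi)\big)-\sqrt{2h}\,\tfrac12DM_h(x)(B_h(x)\xi,B_h(x)^{-T}\xi,B_h(x)^{-T}\xi)$$ and $\tilde\alpha_h(x,\xi)=\min(1,\exp(-\beta\Gamma_h(x,\xi)))$. *)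

theory Defs
  imports "HOL-Analysis.Analysis" "HOL-Probability.Probability"
begin

definition gauss_pdf :: "real \<Rightarrow> real^'n \<Rightarrow> real" where
  "gauss_pdf \<beta> x = (\<beta> / (2 * pi)) powr (real CARD('n) / 2) * exp (- \<beta> * (norm x)^2 / 2)"

definition gauss :: "real \<Rightarrow> (real^'n) measure" where
  "gauss \<beta> = density lborel (\<lambda>x. ennreal (gauss_pdf \<beta> x))"

definition Mh :: "(real^'n \<Rightarrow> real^'n^'n) \<Rightarrow> real^'n \<Rightarrow> real^'n^'n" where
  "Mh Bh x = Bh x ** transpose (Bh x)"

definition DMh :: "(real^'n \<Rightarrow> real^'n^'n) \<Rightarrow> (real^'n \<Rightarrow> real^'n \<Rightarrow> real^'n^'n)
    \<Rightarrow> real^'n \<Rightarrow> real^'n \<Rightarrow> real^'n^'n" where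
  "DMh Bh DB x u = DB x u ** transpose (Bh x) + Bh x ** transpose (DB x u)"

text \<open>DM_h(x)(u,v,w) = sum_{i,j,k} dM_ij/dx_k u_k v_j w_i = w . (DM_h(x)(u) v).\<close>
definition DMh3 :: "(real^'n \<Rightarrow> real^'n^'n) \<Rightarrow> (real^'n \<Rightarrow> real^'n \<Rightarrow> real^'n^'n)
    \<Rightarrow> real^'n \<Rightarrow> real^'n \<Rightarrow> real^'n \<Rightarrow> real^'n \<Rightarrow> real" where
  "DMh3 Bh DB x u v w = w \<bullet> (DMh Bh DB x u *v v)"

definition alpha_h :: "real \<Rightarrow> (real^'n \<Rightarrow> real) \<Rightarrow> (real^'n \<Rightarrow> real^'n) \<Rightarrow> (real^'n \<Rightarrow> real^'n^'n)
    \<Rightarrow> real \<Rightarrow> real^'n \<Rightarrow> real^'n \<Rightarrow> real" where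
  "alpha_h \<beta> U G Bh h X0 \<xi> =
    (let Xt = X0 + sqrt (h / 2) *\<^sub>R (Bh X0 *v \<xi>);
         Xs = Xt + h *\<^sub>R G Xt + (Xt - X0);
         \<eta> = matrix_inv (Bh Xs) *v (Bh X0 *v \<xi> + sqrt (2 * h) *\<^sub>R G Xt)
     in min 1 (det (Bh X0) / det (Bh Xs) *
          exp (- \<beta> * ((norm \<eta>)^2 / 2 - (norm \<xi>)^2 / 2 + U Xs - U X0))))"

text \<open>Gamma_h(x, xi); gU is the gradient DU of U, DB x u the derivative of B_h at x in direction u.\<close>
definition Gamma_h :: "real \<Rightarrow> (real^'n \<Rightarrow> real^'n) \<Rightarrow> (real^'n \<Rightarrow> real^'n) \<Rightarrow> (real^'n \<Rightarrow> real^'n^'n)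
    \<Rightarrow> (real^'n \<Rightarrow> real^'n \<Rightarrow> real^'n^'n) \<Rightarrow> real \<Rightarrow> real^'n \<Rightarrow> real^'n \<Rightarrow> real" where
  "Gamma_h \<beta> gU G Bh DB h x \<xi> =
     sqrt (2 * h) * ((gU x + matrix_inv (Mh Bh x) *v G x) \<bullet> (Bh x *v \<xi>))
   + sqrt (2 * h) * (inverse \<beta> / 2) * trace (matrix_inv (Mh Bh x) ** DMh Bh DB x (Bh x *v \<xi>))
   - sqrt (2 * h) * (1 / 2) * DMh3 Bh DB x (Bh x *v \<xi>) (transpose (matrix_inv (Bh x)) *v \<xi>)
        (transpose (matrix_inv (Bh x)) *v \<xi>)"

definition alpha_tilde_h :: "real \<Rightarrow> (real^'n \<Rightarrow> real^'n) \<Rightarrow> (real^'n \<Rightarrow> real^'n) \<Rightarrow> (real^'n \<Rightarrow> real^'n^'n)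
    \<Rightarrow> (real^'n \<Rightarrow> real^'n \<Rightarrow> real^'n^'n) \<Rightarrow> real \<Rightarrow> real^'n \<Rightarrow> real^'n \<Rightarrow> real" where
  "alpha_tilde_h \<beta> gU G Bh DB h x \<xi> = min 1 (exp (- \<beta> * Gamma_h \<beta> gU G Bh DB h x \<xi>))"

end

theory Submission
  imports Defs
begin

text \<open>
  Write a for the logarithm of the acceptance ratio, so that alpha_h = min 1 (exp a) and
  alpha_tilde_h = min 1 (exp (- \<beta> \<Gamma>_h)). Since t \<mapsto> min 1 (exp t) is 1-Lipschitz, it suffices to
  bound \<bar>a + \<beta> \<Gamma>_h\<bar> by C h (1 + \<bar>\<xi>\<bar>)^4 with C independent of h and X0, and to integrate
  against the Gaussian, whose fourth moment is finite.

  The increment X1* - X0 = \<surd>(2h) B(X0) \<xi> + h G(X1~) is of order \<surd>h (1 + \<bar>\<xi>\<bar>), and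
  a + \<beta> \<Gamma>_h splits into three remainders. The potential part is a first-order Taylor
  remainder of U. For the determinant part write B(X1*) = B(X0) (I + A); then
  ln det (I + A) = trace A + O(\<bar>A\<bar>^2), and trace A matches the term of \<Gamma>_h because
  trace (M^-1 DM(u)) = 2 trace (B^-1 DB(u)). For the kinetic part, M^-1 = B^-T B^-1 turns the
  first-order terms of \<bar>\<eta>\<bar>^2/2 - \<bar>\<xi>\<bar>^2/2 into exactly those of \<Gamma>_h. Every remainder is
  of order h (1 + \<bar>\<xi>\<bar>)^4 by the bounds on U, G, B and their derivatives.
\<close>

section \<open>Frobenius norm, trace, determinant and inverse of matrices\<close>

text \<open>The norm of \<open>real^'n^'m\<close> is the Frobenius norm; in particular it is submultiplicative.\<close>

lemma norm_vec_power2: "norm (x :: 'a::real_normed_vector^'n) ^ 2 = (\<Sum>i\<in>UNIV. norm (x $ i) ^ 2)"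
  by (simp add: norm_vec_def L2_set_def sum_nonneg)

lemma abs_matrix_entry_le_norm: "\<bar>(A :: real^'n^'m) $ i $ j\<bar> \<le> norm A"
  by (meson component_le_norm_cart Finite_Cartesian_Product.norm_nth_le order_trans)

lemma norm_matrix_vector_mult_le: "norm ((A :: real^'n^'m) *v x) \<le> norm A * norm x"
proof (rule power2_le_imp_le)
  have "norm (A *v x) ^ 2 = (\<Sum>i\<in>UNIV. (A $ i \<bullet> x) ^ 2)"
    by (simp add: norm_vec_power2 matrix_vector_mul_component)
  also have "\<dots> \<le> (\<Sum>i\<in>UNIV. norm (A $ i) ^ 2 * norm x ^ 2)"
    by (intro sum_mono) (metis Cauchy_Schwarz_ineq2 abs_ge_zero power_mono power2_abs power_mult_distrib)
  also have "\<dots> = (norm A * norm x) ^ 2"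
    by (simp add: norm_vec_power2 power_mult_distrib sum_distrib_right)
  finally show "norm (A *v x) ^ 2 \<le> (norm A * norm x) ^ 2" .
qed simp

lemma norm_matrix_vector_mult_le_of_le:
  fixes A :: "real^'n^'m" assumes "norm A \<le> a" "norm v \<le> b"
  shows "norm (A *v v) \<le> a * b"
  using norm_matrix_vector_mult_le[of A v] mult_mono[OF assms order_trans[OF norm_ge_zero assms(1)] norm_ge_zero]
  by linarith

lemma norm_transpose: "norm (transpose (A :: real^'n^'m)) = norm A"
proof -
  have "norm (transpose A) ^ 2 = norm A ^ 2"
    by (simp add: norm_vec_power2 transpose_def) (rule sum.swap)
  then show ?thesis by simp
qed

lemma row_matrix_mult: "((A :: real^'n^'m) ** B) $ i = transpose B *v (A $ i)"
  by (simp add: vec_eq_iff matrix_matrix_mult_def matrix_vector_mult_def transpose_def mult.commute)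

lemma norm_matrix_mult_le: "norm ((A :: real^'n^'m) ** (B :: real^'k^'n)) \<le> norm A * norm B"
proof (rule power2_le_imp_le)
  have "norm (A ** B) ^ 2 = (\<Sum>i\<in>UNIV. norm (transpose B *v A $ i) ^ 2)"
    by (simp add: norm_vec_power2[of "A ** B"] row_matrix_mult)
  also have "\<dots> \<le> (\<Sum>i\<in>UNIV. norm B ^ 2 * norm (A $ i) ^ 2)"
    by (intro sum_mono) (metis norm_matrix_vector_mult_le norm_transpose norm_ge_zero power_mono power_mult_distrib)
  also have "\<dots> = (norm A * norm B) ^ 2"
    by (simp add: norm_vec_power2[of A] power_mult_distrib sum_distrib_left mult.commute)
  finally show "norm (A ** B) ^ 2 \<le> (norm A * norm B) ^ 2" .
qed simp

lemma trace_transpose: "trace (transpose (A :: real^'n^'n)) = trace A"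
  by (simp add: trace_def transpose_def)

lemma trace_scaleR: "trace (c *\<^sub>R (A :: real^'n^'n)) = c * trace A"
  by (simp add: trace_def sum_distrib_left)

lemma abs_trace_le: "\<bar>trace (A :: real^'n^'n)\<bar> \<le> CARD('n) * norm A"
proof -
  have "\<bar>trace A\<bar> \<le> (\<Sum>i\<in>UNIV. \<bar>A $ i $ i\<bar>)" by (simp add: trace_def)
  also have "\<dots> \<le> (\<Sum>i::'n\<in>UNIV. norm A)" by (intro sum_mono abs_matrix_entry_le_norm)
  finally show ?thesis by simp
qed

lemma abs_det_le: "\<bar>det (A :: real^'n^'n)\<bar> \<le> fact CARD('n) * norm A ^ CARD('n)"
proof -
  have "\<bar>det A\<bar> \<le> (\<Sum>p | p permutes (UNIV::'n set). \<bar>\<Prod>i\<in>UNIV. A $ i $ p i\<bar>)"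
    unfolding det_def by (rule order_trans[OF sum_abs], intro sum_mono) (simp add: abs_mult sign_def)
  also have "\<dots> \<le> (\<Sum>p | p permutes (UNIV::'n set). norm A ^ CARD('n))"
    by (intro sum_mono) (simp add: abs_prod prod_mono abs_matrix_entry_le_norm flip: prod_constant)
  also have "\<dots> = fact CARD('n) * norm A ^ CARD('n)"
    by (simp add: card_permutations)
  finally show ?thesis .
qed

lemma matrix_inv_right: "invertible A \<Longrightarrow> A ** matrix_inv A = mat 1"
  and matrix_inv_left: "invertible A \<Longrightarrow> matrix_inv A ** A = mat 1"
  for A :: "real^'n^'n"
  using someI_ex[of "\<lambda>A'. A ** A' = mat 1 \<and> A' ** A = mat 1"] by (auto simp: invertible_def matrix_inv_def)

lemma matrix_inv_eqI:
  fixes A X :: "real^'n^'n" assumes "invertible A" "X ** A = mat 1"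
  shows "matrix_inv A = X"
  by (metis assms matrix_inv_right matrix_mul_assoc matrix_mul_lid matrix_mul_rid)

lemma matrix_diff_ldistrib: "(A :: real^'n^'m) ** (B - C) = A ** B - A ** C"
  by (simp add: matrix_matrix_mult_def vec_eq_iff algebra_simps sum_subtractf)

lemma matrix_diff_rdistrib: "((A :: real^'n^'m) - B) ** C = A ** C - B ** C"
  by (simp add: matrix_matrix_mult_def vec_eq_iff algebra_simps sum_subtractf)

lemma matrix_inv_diff:
  fixes A B :: "real^'n^'n" assumes "invertible A" "invertible B"
  shows "matrix_inv B - matrix_inv A = matrix_inv B ** (A - B) ** matrix_inv A"
proof -
  have "matrix_inv B ** (A - B) ** matrix_inv A
      = matrix_inv B ** (A ** matrix_inv A) - (matrix_inv B ** B) ** matrix_inv A"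
    by (simp add: matrix_diff_ldistrib matrix_diff_rdistrib matrix_mul_assoc)
  then show ?thesis by (simp add: matrix_inv_left matrix_inv_right assms)
qed

lemma matrix_inv_mult_transpose:
  fixes B :: "real^'n^'n" assumes "invertible B"
  shows "matrix_inv (B ** transpose B) = transpose (matrix_inv B) ** matrix_inv B"
proof (rule matrix_inv_eqI)
  show "invertible (B ** transpose B)" by (intro invertible_mult transpose_invertible assms)
  have "transpose (matrix_inv B) ** matrix_inv B ** (B ** transpose B)
      = transpose (matrix_inv B) ** (matrix_inv B ** B) ** transpose B"
    by (simp add: matrix_mul_assoc)
  also have "\<dots> = transpose (B ** matrix_inv B)"
    by (simp add: matrix_inv_left[OF assms] matrix_transpose_mul)
  finally show "transpose (matrix_inv B) ** matrix_inv B ** (B ** transpose B) = mat 1"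
    by (simp add: matrix_inv_right[OF assms])
qed

section \<open>The determinant near the identity\<close>

lemma abs_prod_one_plus_sub_le:
  fixes a :: "'a \<Rightarrow> real"
  assumes "finite S" "\<And>i. i \<in> S \<Longrightarrow> \<bar>a i\<bar> \<le> t" "t \<le> 1"
  shows "\<bar>(\<Prod>i\<in>S. 1 + a i) - 1 - (\<Sum>i\<in>S. a i)\<bar> \<le> 4 ^ card S * t\<^sup>2"
  using assms
proof (induction S rule: finite_induct)
  case (insert x F)
  define P where "P = (\<Prod>i\<in>F. 1 + a i)"
  define c where "c = real (card F)"
  have ax: "\<bar>a x\<bar> \<le> t" and t0: "0 \<le> t" using insert.prems(1) abs_ge_zero order_trans by blast+
  have IH: "\<bar>P - 1 - (\<Sum>i\<in>F. a i)\<bar> \<le> 4 ^ card F * t\<^sup>2"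
    using insert by (simp add: P_def)
  have "\<bar>\<Sum>i\<in>F. a i\<bar> \<le> c * t"
  proof -
    have "(\<Sum>i\<in>F. \<bar>a i\<bar>) \<le> c * t"
      using sum_bounded_above[of F "\<lambda>i. \<bar>a i\<bar>" t] insert.prems(1) by (simp add: c_def)
    then show ?thesis using sum_abs[of a F] by linarith
  qed
  with IH have "\<bar>P - 1\<bar> \<le> 4 ^ card F * t\<^sup>2 + c * t" by linarith
  then have "\<bar>a x * (P - 1)\<bar> \<le> t * (4 ^ card F * t\<^sup>2 + c * t)"
    unfolding abs_mult using ax t0 by (intro mult_mono) auto
  also have "\<dots> \<le> (4 ^ card F + c) * t\<^sup>2"
  proof -
    have "t * (4 ^ card F * t\<^sup>2) \<le> 4 ^ card F * t\<^sup>2"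
      using insert.prems(2) t0 by (intro mult_left_le_one_le) auto
    then show ?thesis by (simp add: power2_eq_square algebra_simps)
  qed
  finally have rest: "\<bar>a x * (P - 1)\<bar> \<le> (4 ^ card F + c) * t\<^sup>2" .
  have "c \<le> 4 ^ card F"
    using of_nat_less_two_power[of "card F", where 'a=real] power_mono[of 2 4 "card F"]
    by (simp add: c_def)
  then have "4 ^ card F * t\<^sup>2 + (4 ^ card F + c) * t\<^sup>2 \<le> 4 ^ Suc (card F) * t\<^sup>2"
  proof -
    have "4 ^ card F + (4 ^ card F + c) \<le> 4 ^ Suc (card F)"
      using \<open>c \<le> 4 ^ card F\<close> zero_le_power[of "4::real" "card F"] by (simp only: power_Suc) linarith
    from mult_right_mono[OF this, of "t\<^sup>2"] show ?thesis by (simp add: distrib_right)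
  qed
  moreover have "(\<Prod>i\<in>insert x F. 1 + a i) - 1 - (\<Sum>i\<in>insert x F. a i)
      = (P - 1 - (\<Sum>i\<in>F. a i)) + a x * (P - 1)"
    using insert.hyps by (simp add: P_def algebra_simps)
  ultimately show ?case
    using IH rest insert.hyps by (simp del: power_Suc)
qed simp

lemma abs_prod_diagonal_perm_le:
  fixes A :: "real^'n^'n"
  assumes p: "p permutes (UNIV::'n set)" and "p \<noteq> id" and "norm A \<le> 1"
  shows "\<bar>\<Prod>i\<in>UNIV. (mat 1 + A) $ i $ p i\<bar> \<le> 2 ^ CARD('n) * norm A ^ 2"
proof -
  let ?c = "\<lambda>k. (mat 1 + A) $ k $ p k"
  \<comment> \<open>both \<open>i\<close> and \<open>p i\<close> are moved, so two factors are off-diagonal entries of \<open>A\<close>\<close>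
  obtain i where pi: "p i \<noteq> i" using \<open>p \<noteq> id\<close> by (auto simp: fun_eq_iff)
  have pj: "p (p i) \<noteq> p i" using pi permutes_inj[OF p] by (auto dest: injD)
  have small: "\<bar>?c k\<bar> \<le> norm A" if "p k \<noteq> k" for k
    using that by (simp add: mat_def abs_matrix_entry_le_norm)
  have bounded: "\<bar>?c k\<bar> \<le> 2" for k
    using abs_matrix_entry_le_norm[of A k "p k"] \<open>norm A \<le> 1\<close> by (auto simp: mat_def)
  have rest: "\<bar>\<Prod>k\<in>S. ?c k\<bar> \<le> 2 ^ card S" for S
    unfolding abs_prod by (rule order_trans[OF prod_mono[where g="\<lambda>_. 2"]]) (simp_all add: bounded del: vector_add_component)
  have "\<bar>\<Prod>k\<in>UNIV. ?c k\<bar> = \<bar>?c i\<bar> * (\<bar>?c (p i)\<bar> * \<bar>\<Prod>k\<in>UNIV - {i} - {p i}. ?c k\<bar>)"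
    using pi by (simp add: prod.remove[of UNIV i] prod.remove[of "UNIV - {i}" "p i"] abs_mult)
  also have "\<dots> \<le> norm A * (norm A * 2 ^ card (UNIV - {i} - {p i}))"
    by (intro mult_mono small pi pj rest) auto
  also have "\<dots> \<le> norm A * (norm A * 2 ^ CARD('n))"
    by (intro mult_left_mono power_increasing) (auto simp: card_mono)
  finally show ?thesis by (simp add: power2_eq_square mult_ac)
qed

lemma abs_det_one_plus_sub_trace_le:
  fixes A :: "real^'n^'n" assumes "norm A \<le> 1"
  shows "\<bar>det (mat 1 + A) - 1 - trace A\<bar> \<le> 2 * fact CARD('n) * 4 ^ CARD('n) * norm A ^ 2"
proof -
  let ?P = "{p. p permutes (UNIV::'n set)}"
  let ?T = "\<lambda>p. of_int (sign p) * (\<Prod>i\<in>UNIV. (mat 1 + A) $ i $ p i)"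
  have "det (mat 1 + A) = ?T id + (\<Sum>p\<in>?P - {id}. ?T p)"
    unfolding det_def by (rule sum.remove) (simp_all add: finite_permutations)
  then have split: "det (mat 1 + A) - 1 - trace A
      = ((\<Prod>i\<in>UNIV. 1 + A $ i $ i) - 1 - (\<Sum>i\<in>UNIV. A $ i $ i)) + (\<Sum>p\<in>?P - {id}. ?T p)"
    by (simp add: trace_def mat_def)
  have diagonal: "\<bar>(\<Prod>i\<in>UNIV. 1 + A $ i $ i) - 1 - (\<Sum>i\<in>UNIV. A $ i $ i)\<bar> \<le> 4 ^ CARD('n) * norm A ^ 2"
    using abs_prod_one_plus_sub_le[of UNIV "\<lambda>i. A $ i $ i" "norm A"] assms
    by (simp add: abs_matrix_entry_le_norm)
  have "\<bar>\<Sum>p\<in>?P - {id}. ?T p\<bar> \<le> (\<Sum>p\<in>?P. 2 ^ CARD('n) * norm A ^ 2)"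
    by (rule order_trans[OF sum_abs], rule order_trans[OF sum_mono sum_mono2])
      (use abs_prod_diagonal_perm_le assms in \<open>auto simp: abs_mult sign_def finite_permutations\<close>)
  also have "\<dots> \<le> fact CARD('n) * (4 ^ CARD('n) * norm A ^ 2)"
    using mult_right_mono[OF power_mono[of "2::real" 4 "CARD('n)"], of "norm A ^ 2"]
    by (simp add: card_permutations)
  finally have "\<bar>\<Sum>p\<in>?P - {id}. ?T p\<bar> \<le> fact CARD('n) * (4 ^ CARD('n) * norm A ^ 2)" .
  moreover have "4 ^ CARD('n) * norm A ^ 2 \<le> fact CARD('n) * (4 ^ CARD('n) * norm A ^ 2)"
    using mult_right_mono[of 1 "fact CARD('n)" "4 ^ CARD('n) * norm A ^ 2"] by simp
  ultimately show ?thesis using split diagonal by (simp add: mult_ac)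
qed

lemma abs_ln_det_one_plus_sub_trace_le_of_small:
  fixes A :: "real^'n^'n"
  defines "m \<equiv> real CARD('n) + 2 * fact CARD('n) * 4 ^ CARD('n)"
  assumes small: "2 * m * norm A \<le> 1"
  shows "\<bar>ln (det (mat 1 + A)) - trace A\<bar> \<le> 3 * m\<^sup>2 * norm A ^ 2"
proof -
  define c t where "c = 2 * fact CARD('n) * (4::real) ^ CARD('n)" and "t = norm A"
  define y where "y = det (mat 1 + A) - 1"
  have "1 \<le> real CARD('n)" "0 \<le> c" "0 \<le> t" by (simp_all add: c_def t_def)
  then have "1 \<le> m" "c \<le> m" unfolding m_def c_def by linarith+
  then have "t \<le> 1" and "c \<le> m\<^sup>2"
    using small by (smt (verit) mult_le_cancel_right1 t_def, smt (verit) mult_le_cancel_left1 power2_eq_square)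
  then have y_trace: "\<bar>y - trace A\<bar> \<le> c * t\<^sup>2"
    using abs_det_one_plus_sub_trace_le[of A] by (simp add: y_def c_def t_def)
  have "c * t\<^sup>2 \<le> c * t" using \<open>t \<le> 1\<close> \<open>0 \<le> t\<close> \<open>0 \<le> c\<close>
    by (intro mult_left_mono) (auto simp: power2_eq_square mult_left_le)
  moreover have "\<bar>trace A\<bar> \<le> real CARD('n) * t" using abs_trace_le[of A] by (simp add: t_def)
  moreover have "m = real CARD('n) + c" by (simp add: m_def c_def)
  ultimately have y_le: "\<bar>y\<bar> \<le> m * t"
    using y_trace by (simp add: algebra_simps)
  then have "\<bar>y\<bar> \<le> 1 / 2" using small by (simp add: t_def)
  then have "\<bar>ln (1 + y) - y\<bar> \<le> 2 * y\<^sup>2" by (rule abs_ln_one_plus_x_minus_x_bound)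
  also have "\<dots> \<le> 2 * (m * t)\<^sup>2"
    using power_mono[OF y_le abs_ge_zero, of 2] by simp
  finally have "\<bar>ln (det (mat 1 + A)) - trace A\<bar> \<le> 2 * (m * t)\<^sup>2 + c * t\<^sup>2"
    using y_trace by (simp add: y_def)
  also have "\<dots> \<le> 3 * m\<^sup>2 * t\<^sup>2"
    using mult_right_mono[OF \<open>c \<le> m\<^sup>2\<close>, of "t\<^sup>2"] by (simp add: power_mult_distrib)
  finally show ?thesis by (simp add: t_def)
qed

definition ln_det_const :: "nat \<Rightarrow> real \<Rightarrow> real" where
  "ln_det_const n L = 5 * (real n + 2 * fact n * 4 ^ n)\<^sup>2 * (1 + L)"

lemma abs_ln_det_one_plus_sub_trace_le:
  fixes A :: "real^'n^'n" and L :: real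
  assumes L: "\<bar>ln (det (mat 1 + A))\<bar> \<le> L"
  shows "\<bar>ln (det (mat 1 + A)) - trace A\<bar> \<le> ln_det_const CARD('n) L * norm A ^ 2"
proof -
  define N m t where "N = real CARD('n)" and "m = real CARD('n) + 2 * fact CARD('n) * 4 ^ CARD('n)"
    and "t = norm A"
  have "1 \<le> N" "0 \<le> 2 * fact CARD('n) * (4::real) ^ CARD('n)" "0 \<le> L" "0 \<le> t"
    using L by (simp_all add: N_def t_def)
  then have "1 \<le> m" "N \<le> m" unfolding N_def m_def by linarith+
  have "\<bar>ln (det (mat 1 + A)) - trace A\<bar> \<le> 5 * m\<^sup>2 * (1 + L) * t\<^sup>2"
  proof (cases "2 * m * t \<le> 1")
    case True
    then have "\<bar>ln (det (mat 1 + A)) - trace A\<bar> \<le> 3 * m\<^sup>2 * t\<^sup>2"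
      unfolding m_def t_def by (rule abs_ln_det_one_plus_sub_trace_le_of_small)
    also have "\<dots> \<le> 5 * m\<^sup>2 * (1 + L) * t\<^sup>2"
      using mult_nonneg_nonneg[OF zero_le_power2 \<open>0 \<le> L\<close>, of m]
      by (intro mult_right_mono) (simp_all add: algebra_simps)
    finally show ?thesis .
  next
    case False
    \<comment> \<open>for large \<open>A\<close> the a priori bound \<open>L\<close> replaces the expansion\<close>
    then have r: "1 \<le> 2 * m * t" by simp
    have "L \<le> L * (2 * m * t)\<^sup>2"
      using \<open>0 \<le> L\<close> r by (metis mult_left_mono mult_1_right one_le_power)
    moreover have "N * t \<le> N * t * (2 * m * t)"
      using mult_left_mono[OF r, of "N * t"] \<open>0 \<le> t\<close> by (simp add: N_def)
    moreover have "\<bar>trace A\<bar> \<le> N * t" using abs_trace_le[of A] by (simp add: N_def t_def)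
    ultimately have "\<bar>ln (det (mat 1 + A)) - trace A\<bar> \<le> L * (2 * m * t)\<^sup>2 + N * t * (2 * m * t)"
      using L by linarith
    also have "\<dots> \<le> 4 * m\<^sup>2 * L * t\<^sup>2 + 2 * m\<^sup>2 * t\<^sup>2"
      using mult_right_mono[OF mult_right_mono[OF \<open>N \<le> m\<close>], of m "2 * t\<^sup>2"] \<open>1 \<le> m\<close>
      by (simp add: power2_eq_square algebra_simps)
    also have "\<dots> \<le> 5 * m\<^sup>2 * (1 + L) * t\<^sup>2"
      using \<open>0 \<le> L\<close> by (simp add: algebra_simps)
    finally show ?thesis .
  qed
  then show ?thesis by (simp add: ln_det_const_def m_def t_def)
qed

lemma abs_min_one_exp_diff_le:
  fixes a b :: real shows "\<bar>min 1 (exp a) - min 1 (exp b)\<bar> \<le> \<bar>a - b\<bar>"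
proof -
  have *: "min 1 (exp b) - min 1 (exp a) \<le> b - a" if "a \<le> b" for a b :: real
  proof -
    define u v where "u = min 0 a" and "v = min 0 b"
    have "u \<le> v" "v \<le> 0" "v - u \<le> b - a" using that by (auto simp: u_def v_def)
    have "exp v - exp u = exp v * (1 - exp (u - v))" by (simp add: algebra_simps exp_diff)
    also have "\<dots> \<le> 1 * (v - u)"
    proof (rule mult_mono)
      show "1 - exp (u - v) \<le> v - u" using exp_ge_add_one_self[of "u - v"] by linarith
    qed (use \<open>u \<le> v\<close> \<open>v \<le> 0\<close> in auto)
    finally show ?thesis
      using \<open>v - u \<le> b - a\<close> by (simp add: u_def v_def min_def split: if_splits)
  qed
  show ?thesis
    using *[of a b] *[of b a] exp_le_cancel_iff[of a b] exp_le_cancel_iff[of b a]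
    by (cases "a \<le> b") (auto simp: abs_le_iff min_def)
qed

lemma norm_diff_le_of_onorm_derivative_le:
  fixes f :: "'a::real_normed_vector \<Rightarrow> 'b::real_normed_vector"
  assumes "\<And>z. (f has_derivative f' z) (at z)" "\<And>z. onorm (f' z) \<le> M"
  shows "norm (f y - f x) \<le> M * norm (y - x)"
  using differentiable_bound[of UNIV f f' M y x] assms by auto

lemma norm_linearization_remainder_le:
  fixes f :: "'a::real_normed_vector \<Rightarrow> 'b::real_normed_vector"
  assumes deriv: "\<And>z. (f has_derivative f' z) (at z)"
    and lip: "\<And>z. onorm (f' z - f' x) \<le> M * norm (z - x)" and "0 \<le> M"
  shows "norm (f y - f x - f' x (y - x)) \<le> M * norm (y - x) ^ 2"
proof -
  have "norm (f y - f x - f' x (y - x)) \<le> norm (y - x) * (M * norm (y - x))"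
  proof (rule differentiable_bound_linearization[where S="closed_segment x y"])
    fix z assume "z \<in> closed_segment x y"
    then have "norm (z - x) \<le> norm (y - x)" by (rule segment_bound1)
    then show "onorm (f' z - f' x) \<le> M * norm (y - x)"
      using lip[of z] \<open>0 \<le> M\<close> by (meson mult_left_mono order_trans)
  next
    show "x + t *\<^sub>R (y - x) \<in> closed_segment x y" if "t \<in> {0..1}" for t
      using that unfolding closed_segment_def by (auto intro!: exI[of _ t] simp: algebra_simps)
  qed (auto intro: has_derivative_at_withinI[OF deriv])
  then show ?thesis by (simp add: power2_eq_square mult_ac)
qed

section \<open>Identities for M = B B^T\<close>

lemma trace_inv_mult_transpose_mult_sym:
  fixes B D :: "real^'n^'n" assumes "invertible B"
  shows "trace (matrix_inv (B ** transpose B) ** (D ** transpose B + B ** transpose D))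
       = 2 * trace (matrix_inv B ** D)"
proof -
  let ?Bi = "matrix_inv B"
  have "matrix_inv (B ** transpose B) ** (D ** transpose B + B ** transpose D)
     = transpose ?Bi ** (?Bi ** D ** transpose B) + transpose ?Bi ** ((?Bi ** B) ** transpose D)"
    by (simp add: matrix_inv_mult_transpose[OF assms] matrix_add_ldistrib matrix_mul_assoc)
  also have "\<dots> = transpose ?Bi ** (?Bi ** D ** transpose B) + transpose (D ** ?Bi)"
    by (simp add: matrix_inv_left[OF assms] matrix_transpose_mul)
  finally have eq: "matrix_inv (B ** transpose B) ** (D ** transpose B + B ** transpose D)
     = transpose ?Bi ** (?Bi ** D ** transpose B) + transpose (D ** ?Bi)" .
  have "trace (transpose ?Bi ** (?Bi ** D ** transpose B)) = trace (?Bi ** D ** transpose B ** transpose ?Bi)"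
    by (rule trace_mul_sym)
  also have "\<dots> = trace (?Bi ** D ** transpose (?Bi ** B))"
    by (simp add: matrix_transpose_mul matrix_mul_assoc)
  finally have "trace (transpose ?Bi ** (?Bi ** D ** transpose B)) = trace (?Bi ** D)"
    by (simp add: matrix_inv_left[OF assms])
  moreover have "trace (transpose (D ** ?Bi)) = trace (?Bi ** D)"
    by (metis trace_transpose trace_mul_sym)
  ultimately show ?thesis by (simp add: eq trace_add)
qed

lemma inner_inv_transpose_mult_sym:
  fixes B D :: "real^'n^'n" and \<xi> :: "real^'n" assumes "invertible B"
  defines "v \<equiv> transpose (matrix_inv B) *v \<xi>"
  shows "v \<bullet> ((D ** transpose B + B ** transpose D) *v v) = 2 * (\<xi> \<bullet> (matrix_inv B *v (D *v \<xi>)))"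
proof -
  have tv: "transpose B *v v = \<xi>"
    by (simp add: v_def matrix_vector_mul_assoc matrix_inv_left[OF assms(1)] flip: matrix_transpose_mul
        del: transpose_matrix_vector)
  have "v \<bullet> (D *v \<xi>) = \<xi> \<bullet> (matrix_inv B *v (D *v \<xi>))"
    by (simp add: v_def dot_lmul_matrix)
  moreover have "v \<bullet> (B *v (transpose D *v v)) = v \<bullet> (D *v \<xi>)"
    using tv by (simp add: dot_lmul_matrix[symmetric] inner_commute)
  ultimately show ?thesis
    by (simp add: matrix_vector_mult_add_rdistrib tv inner_add_right flip: matrix_vector_mul_assoc
        del: transpose_matrix_vector)
qed

lemma inner_inv_mult_transpose:
  fixes B :: "real^'n^'n" assumes "invertible B"
  shows "(matrix_inv (B ** transpose B) *v g) \<bullet> (B *v \<xi>) = \<xi> \<bullet> (matrix_inv B *v g)"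
proof -
  have "(matrix_inv (B ** transpose B) *v g) \<bullet> (B *v \<xi>)
      = (transpose (matrix_inv B) *v (matrix_inv B *v g)) \<bullet> (B *v \<xi>)"
    by (simp add: matrix_inv_mult_transpose[OF assms] matrix_vector_mul_assoc del: transpose_matrix_vector)
  also have "\<dots> = (matrix_inv B *v g) \<bullet> (matrix_inv B *v (B *v \<xi>))"
    by (simp add: dot_lmul_matrix)
  finally show ?thesis
    by (simp add: matrix_vector_mul_assoc matrix_inv_left[OF assms] inner_commute)
qed

lemma det_mult_pos_of_continuous_invertible:
  fixes B :: "'a::real_normed_vector \<Rightarrow> real^'n^'n"
  assumes "continuous_on UNIV B" "\<And>z. invertible (B z)"
  shows "0 < det (B x) * det (B y)"
proof -
  have nz: "det (B z) \<noteq> 0" for z using assms(2) invertible_det_nz by blast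
  have conn: "connected (range (\<lambda>z. det (B z)))"
    by (intro connected_continuous_image connected_UNIV)
      (unfold det_def, intro continuous_intros assms(1))
  show ?thesis
  proof (rule ccontr)
    assume "\<not> ?thesis"
    then have "min (det (B x)) (det (B y)) \<le> 0" "0 \<le> max (det (B x)) (det (B y))"
      using nz[of x] nz[of y] by (auto simp: min_def max_def zero_less_mult_iff)
    then have "0 \<in> range (\<lambda>z. det (B z))"
      using conn unfolding connected_iff_interval by (metis (no_types, lifting) min_def max_def rangeI)
    then show False using nz by auto
  qed
qed

section \<open>One proposal step\<close>

definition acceptance_const :: "nat \<Rightarrow> real \<Rightarrow> real \<Rightarrow> real" where
  "acceptance_const n K \<beta> = (9 * ln_det_const n (2 * ln (fact n * K ^ n)) + 10 * real n + 50 * \<beta>) * K ^ 6"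

text \<open>
  All constants below depend only on the dimension, \<open>K\<close> and \<open>\<beta>\<close>, never on \<open>h\<close>.
\<close>

locale proposal_bounds =
  fixes U :: "real^'n \<Rightarrow> real" and gU :: "real^'n \<Rightarrow> real^'n"
    and HU :: "real^'n \<Rightarrow> real^'n \<Rightarrow> real^'n"
    and G :: "real^'n \<Rightarrow> real^'n" and DG :: "real^'n \<Rightarrow> real^'n \<Rightarrow> real^'n"
    and B :: "real^'n \<Rightarrow> real^'n^'n"
    and DB :: "real^'n \<Rightarrow> (real^'n) \<Rightarrow>\<^sub>L (real^'n^'n)"
    and D2B :: "real^'n \<Rightarrow> real^'n \<Rightarrow> ((real^'n) \<Rightarrow>\<^sub>L (real^'n^'n))"
    and h K :: real
  assumes h_pos: "0 < h" and h_le_1: "h \<le> 1" and K_ge_1: "1 \<le> K"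
    and U_deriv: "\<And>x. (U has_derivative (\<lambda>v. gU x \<bullet> v)) (at x)"
    and gU_deriv: "\<And>x. (gU has_derivative HU x) (at x)"
    and gU_bound: "\<And>x. norm (gU x) \<le> K" and HU_bound: "\<And>x. onorm (HU x) \<le> K"
    and G_bound: "\<And>x. norm (G x) \<le> K" and G_deriv: "\<And>x. (G has_derivative DG x) (at x)"
    and DG_bound: "\<And>x. onorm (DG x) \<le> K"
    and B_invertible: "\<And>x. invertible (B x)" and B_bound: "\<And>x. norm (B x) \<le> K"
    and B_inv_bound: "\<And>x. norm (matrix_inv (B x)) \<le> K"
    and B_deriv: "\<And>x. (B has_derivative blinfun_apply (DB x)) (at x)"
    and DB_bound: "\<And>x. norm (DB x) \<le> K"
    and DB_deriv: "\<And>x. (DB has_derivative D2B x) (at x)"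
    and D2B_bound: "\<And>x. onorm (D2B x) \<le> K"
begin

lemma K_nonneg: "0 \<le> K"
  using K_ge_1 by simp

lemma norm_B_diff_le: "norm (B y - B x) \<le> K * norm (y - x)"
  by (rule norm_diff_le_of_onorm_derivative_le[OF B_deriv]) (metis norm_blinfun.rep_eq DB_bound)

lemma norm_G_diff_le: "norm (G y - G x) \<le> K * norm (y - x)"
  by (rule norm_diff_le_of_onorm_derivative_le[OF G_deriv DG_bound])

lemma norm_B_linearization_le: "norm (B y - B x - DB x (y - x)) \<le> K * norm (y - x) ^ 2"
proof (rule norm_linearization_remainder_le[OF B_deriv _ K_nonneg])
  fix z
  have "norm (DB z - DB x) \<le> K * norm (z - x)"
    by (rule norm_diff_le_of_onorm_derivative_le[OF DB_deriv D2B_bound])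
  then show "onorm (blinfun_apply (DB z) - blinfun_apply (DB x)) \<le> K * norm (z - x)"
    by (simp add: norm_blinfun.rep_eq minus_blinfun.rep_eq fun_diff_def)
qed

lemma abs_U_linearization_le: "\<bar>U y - U x - gU x \<bullet> (y - x)\<bar> \<le> K * norm (y - x) ^ 2"
proof -
  have "norm (U y - U x - (\<lambda>v. gU x \<bullet> v) (y - x)) \<le> K * norm (y - x) ^ 2"
  proof (rule norm_linearization_remainder_le[OF U_deriv _ K_nonneg])
    fix z
    show "onorm ((\<lambda>v. gU z \<bullet> v) - (\<lambda>v. gU x \<bullet> v)) \<le> K * norm (z - x)"
    proof (rule onorm_le)
      fix v
      have "\<bar>(gU z - gU x) \<bullet> v\<bar> \<le> norm (gU z - gU x) * norm v" by (rule Cauchy_Schwarz_ineq2)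
      also have "\<dots> \<le> K * norm (z - x) * norm v"
        by (intro mult_right_mono norm_diff_le_of_onorm_derivative_le[OF gU_deriv HU_bound]) simp
      finally show "norm (((\<lambda>v. gU z \<bullet> v) - (\<lambda>v. gU x \<bullet> v)) v) \<le> K * norm (z - x) * norm v"
        by (simp add: inner_diff_left)
    qed
  qed
  then show ?thesis by simp
qed

lemma norm_B_inv_diff_le: "norm (matrix_inv (B y) - matrix_inv (B x)) \<le> K ^ 3 * norm (y - x)"
proof -
  have "norm (matrix_inv (B y) - matrix_inv (B x))
      \<le> norm (matrix_inv (B y) ** (B x - B y)) * norm (matrix_inv (B x))"
    unfolding matrix_inv_diff[OF B_invertible B_invertible] by (rule norm_matrix_mult_le)
  also have "\<dots> \<le> norm (matrix_inv (B y)) * norm (B x - B y) * norm (matrix_inv (B x))"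
    by (intro mult_right_mono norm_matrix_mult_le norm_ge_zero)
  also have "\<dots> \<le> K * (K * norm (y - x)) * K"
    using norm_B_diff_le[of x y] K_nonneg by (intro mult_mono B_inv_bound) (auto simp: norm_minus_commute)
  finally show ?thesis by (simp add: power3_eq_cube mult_ac)
qed

definition X_tilde :: "real^'n \<Rightarrow> real^'n \<Rightarrow> real^'n" where
  "X_tilde x \<xi> = x + sqrt (h / 2) *\<^sub>R (B x *v \<xi>)"

definition X_star :: "real^'n \<Rightarrow> real^'n \<Rightarrow> real^'n" where
  "X_star x \<xi> = X_tilde x \<xi> + h *\<^sub>R G (X_tilde x \<xi>) + (X_tilde x \<xi> - x)"

lemma sqrt_h_bounds: "sqrt (h / 2) \<le> sqrt h" "sqrt (2 * h) \<le> 2 * sqrt h" "sqrt h * sqrt h = h"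
  "h \<le> sqrt h"
proof -
  show "sqrt (h / 2) \<le> sqrt h" "sqrt (2 * h) \<le> 2 * sqrt h" "sqrt h * sqrt h = h"
    using h_pos real_sqrt_le_mono[of 2 4] by (auto simp: real_sqrt_mult)
  then show "h \<le> sqrt h"
    using h_le_1 mult_left_le_one_le[of "sqrt h" "sqrt h"] by simp
qed

lemma X_star_sub_eq: "X_star x \<xi> - x = sqrt (2 * h) *\<^sub>R (B x *v \<xi>) + h *\<^sub>R G (X_tilde x \<xi>)"
proof -
  have "sqrt (2 * h) = sqrt (2\<^sup>2 * (h / 2))" by simp
  also have "\<dots> = 2 * sqrt (h / 2)" by (simp only: real_sqrt_mult real_sqrt_abs)
  finally have "sqrt (2 * h) *\<^sub>R (B x *v \<xi>) = (X_tilde x \<xi> - x) + (X_tilde x \<xi> - x)"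
    by (simp only: X_tilde_def add_diff_cancel_left' mult_2 scaleR_add_left)
  moreover have "X_star x \<xi> - x = (X_tilde x \<xi> - x) + (X_tilde x \<xi> - x) + h *\<^sub>R G (X_tilde x \<xi>)"
    by (simp add: X_star_def algebra_simps)
  ultimately show ?thesis by simp
qed

lemma norm_B_mult_le: "norm (B x *v \<xi>) \<le> K * (1 + norm \<xi>)"
proof -
  have "norm (B x *v \<xi>) \<le> K * norm \<xi>"
    using norm_matrix_vector_mult_le[of "B x" \<xi>] mult_right_mono[OF B_bound[of x], of "norm \<xi>"] by simp
  then show ?thesis using K_nonneg by (simp add: distrib_left)
qed

lemma norm_X_tilde_sub_le: "norm (X_tilde x \<xi> - x) \<le> K * sqrt h * (1 + norm \<xi>)"
  using mult_mono[OF sqrt_h_bounds(1) norm_B_mult_le] K_nonneg h_pos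
  by (simp add: X_tilde_def mult_ac)

lemma norm_X_star_sub_le: "norm (X_star x \<xi> - x) \<le> 3 * K * sqrt h * (1 + norm \<xi>)"
proof -
  have "norm (X_star x \<xi> - x)
      \<le> norm (sqrt (2 * h) *\<^sub>R (B x *v \<xi>)) + norm (h *\<^sub>R G (X_tilde x \<xi>))"
    unfolding X_star_sub_eq by (rule norm_triangle_ineq)
  also have "\<dots> = sqrt (2 * h) * norm (B x *v \<xi>) + h * norm (G (X_tilde x \<xi>))"
    using h_pos by simp
  also have "\<dots> \<le> 2 * sqrt h * (K * (1 + norm \<xi>)) + sqrt h * (K * (1 + norm \<xi>))"
  proof (intro add_mono mult_mono norm_B_mult_le)
    show "norm (G (X_tilde x \<xi>)) \<le> K * (1 + norm \<xi>)"
      using G_bound[of "X_tilde x \<xi>"] K_nonneg by (simp add: distrib_left) (smt (verit) mult_nonneg_nonneg norm_ge_zero)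
  qed (use sqrt_h_bounds K_nonneg in auto)
  finally show ?thesis by (simp add: algebra_simps)
qed

lemma norm_X_star_sub_power2_le: "norm (X_star x \<xi> - x) ^ 2 \<le> 9 * K\<^sup>2 * h * (1 + norm \<xi>)\<^sup>2"
proof -
  have "norm (X_star x \<xi> - x) ^ 2 \<le> (3 * K * sqrt h * (1 + norm \<xi>)) ^ 2"
    by (rule power_mono[OF norm_X_star_sub_le norm_ge_zero])
  then show ?thesis using h_pos by (simp add: power_mult_distrib)
qed

lemma K_power_mono:
  "i \<le> m \<Longrightarrow> j \<le> k \<Longrightarrow> K ^ i * (1 + norm \<xi>) ^ j \<le> K ^ m * (1 + norm \<xi>) ^ k"
  using K_ge_1 by (intro mult_mono power_increasing) auto

lemma norm_B_X_star_diff_le: "norm (B (X_star x \<xi>) - B x) \<le> 3 * K\<^sup>2 * sqrt h * (1 + norm \<xi>)"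
  using norm_B_diff_le[of "X_star x \<xi>" x] mult_left_mono[OF norm_X_star_sub_le[of x \<xi>] K_nonneg]
  by (simp add: power2_eq_square mult_ac)

lemma norm_DB_drift_le: "norm (DB x (h *\<^sub>R G z)) \<le> K\<^sup>2 * h"
proof -
  have "norm (DB x (h *\<^sub>R G z)) \<le> K * (h * K)"
    using h_pos G_bound K_nonneg
    by (intro order_trans[OF norm_blinfun] mult_mono DB_bound) (auto intro: mult_left_mono)
  then show ?thesis by (simp add: power2_eq_square mult_ac)
qed

lemma norm_B_X_star_linearization_le:
  "norm (B (X_star x \<xi>) - B x - DB x (X_star x \<xi> - x)) \<le> 9 * K ^ 3 * h * (1 + norm \<xi>)\<^sup>2"
  using norm_B_linearization_le[of "X_star x \<xi>" x] mult_left_mono[OF norm_X_star_sub_power2_le[of x \<xi>] K_nonneg]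
  by (simp add: power3_eq_cube power2_eq_square mult_ac)

lemma det_B_mult_pos: "0 < det (B x) * det (B y)"
proof (rule det_mult_pos_of_continuous_invertible[OF _ B_invertible])
  show "continuous_on UNIV B"
    using has_derivative_continuous[OF B_deriv] by (simp add: continuous_at_imp_continuous_on)
qed

lemma abs_ln_abs_det_B_le: "\<bar>ln \<bar>det (B z)\<bar>\<bar> \<le> ln (fact CARD('n) * K ^ CARD('n))"
proof -
  define D where "D = fact CARD('n) * K ^ CARD('n)"
  have "1 * 1 \<le> D"
    unfolding D_def using K_ge_1 by (intro mult_mono) auto
  have bound: "\<bar>det A\<bar> \<le> D" if "norm A \<le> K" for A :: "real^'n^'n"
  proof -
    have "fact CARD('n) * norm A ^ CARD('n) \<le> D"
      unfolding D_def by (intro mult_left_mono power_mono that) auto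
    then show ?thesis using abs_det_le[of A] by linarith
  qed
  have "\<bar>det (B z)\<bar> * \<bar>det (matrix_inv (B z))\<bar> = 1"
    by (simp add: matrix_inv_right[OF B_invertible] flip: abs_mult det_mul)
  then have "1 \<le> \<bar>det (B z)\<bar> * D"
    using mult_left_mono[OF bound[OF B_inv_bound[of z]], of "\<bar>det (B z)\<bar>"] by simp
  then have "ln (1 / D) \<le> ln \<bar>det (B z)\<bar>"
    using \<open>1 * 1 \<le> D\<close> by (subst ln_le_cancel_iff) (auto simp: field_simps)
  moreover have "ln \<bar>det (B z)\<bar> \<le> ln D"
    using bound[OF B_bound] \<open>1 * 1 \<le> D\<close> invertible_det_nz[of "B z"] B_invertible by (subst ln_le_cancel_iff) auto
  ultimately show ?thesis using \<open>1 * 1 \<le> D\<close> K_ge_1 by (simp add: D_def ln_div abs_le_iff)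
qed

lemma abs_trace_B_inv_mult_le: "\<bar>trace (matrix_inv (B x) ** M)\<bar> \<le> CARD('n) * (K * norm M)"
  using abs_trace_le[of "matrix_inv (B x) ** M"]
    order_trans[OF norm_matrix_mult_le mult_right_mono[OF B_inv_bound norm_ge_zero]]
  by (meson mult_left_mono of_nat_0_le_iff order_trans)

lemma abs_ln_det_ratio_sub_trace_le:
  fixes x y :: "real^'n"
  defines "A \<equiv> matrix_inv (B x) ** (B y - B x)"
  shows "\<bar>ln (det (B y) / det (B x)) - trace A\<bar>
    \<le> ln_det_const CARD('n) (2 * ln (fact CARD('n) * K ^ CARD('n))) * norm A ^ 2"
proof -
  have "B y = B x ** (mat 1 + A)"
    by (simp add: A_def matrix_add_ldistrib matrix_mul_assoc matrix_inv_right[OF B_invertible])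
  then have det_y: "det (B y) = det (B x) * det (mat 1 + A)" by (simp add: det_mul)
  have "0 < det (B x) ^ 2 * det (mat 1 + A)"
    using det_B_mult_pos[of x y] by (simp add: det_y power2_eq_square mult_ac)
  then have pos: "0 < det (mat 1 + A)" by (simp add: zero_less_mult_iff)
  have ratio: "det (B y) / det (B x) = det (mat 1 + A)"
    using det_y invertible_det_nz[of "B x"] B_invertible by simp
  have "\<bar>ln (det (mat 1 + A))\<bar> \<le> 2 * ln (fact CARD('n) * K ^ CARD('n))"
    using det_y pos abs_ln_abs_det_B_le[of x] abs_ln_abs_det_B_le[of y] invertible_det_nz[of "B x"] B_invertible
    by (simp add: abs_mult ln_mult)
  then show ?thesis
    unfolding ratio by (rule abs_ln_det_one_plus_sub_trace_le)
qed

lemma norm_B_inv_mult_B_X_star_diff_power2_le: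
  "norm (matrix_inv (B x) ** (B (X_star x \<xi>) - B x)) ^ 2 \<le> 9 * K ^ 6 * h * (1 + norm \<xi>)\<^sup>2"
proof -
  define w where "w = 1 + norm \<xi>"
  have "norm (matrix_inv (B x) ** (B (X_star x \<xi>) - B x)) \<le> K * (3 * K\<^sup>2 * sqrt h * w)"
    unfolding w_def
    by (rule order_trans[OF norm_matrix_mult_le mult_mono[OF B_inv_bound norm_B_X_star_diff_le]]) (auto simp: K_nonneg)
  then have "norm (matrix_inv (B x) ** (B (X_star x \<xi>) - B x)) ^ 2 \<le> (K * (3 * K\<^sup>2 * sqrt h * w))\<^sup>2"
    by (rule power_mono) simp
  also have "\<dots> = 9 * K ^ 6 * (sqrt h * sqrt h) * w\<^sup>2"
    by (simp add: eval_nat_numeral algebra_simps)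
  finally show ?thesis by (simp only: sqrt_h_bounds(3) w_def)
qed

lemma trace_DM_split:
  "sqrt (2 * h) / 2 * trace (matrix_inv (Mh B x) ** DMh B (\<lambda>z. blinfun_apply (DB z)) x (B x *v \<xi>))
    = trace (matrix_inv (B x) ** (B (X_star x \<xi>) - B x))
      - trace (matrix_inv (B x) ** (B (X_star x \<xi>) - B x - DB x (X_star x \<xi> - x)))
      - trace (matrix_inv (B x) ** DB x (h *\<^sub>R G (X_tilde x \<xi>)))"
proof -
  have "sqrt (2 * h) / 2 * trace (matrix_inv (Mh B x) ** DMh B (\<lambda>z. blinfun_apply (DB z)) x (B x *v \<xi>))
      = trace (matrix_inv (B x) ** DB x (sqrt (2 * h) *\<^sub>R (B x *v \<xi>)))"
    unfolding Mh_def DMh_def trace_inv_mult_transpose_mult_sym[OF B_invertible]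
    by (simp add: blinfun.scaleR_right matrix_scalar_ac trace_scaleR flip: scalar_matrix_assoc)
  then show ?thesis
    unfolding X_star_sub_eq
    by (simp add: blinfun.add_right matrix_add_ldistrib matrix_diff_ldistrib trace_add trace_sub)
qed

lemma abs_log_det_remainder_le:
  "\<bar>ln (det (B x) / det (B (X_star x \<xi>)))
      + sqrt (2 * h) / 2 * trace (matrix_inv (Mh B x) ** DMh B (\<lambda>z. blinfun_apply (DB z)) x (B x *v \<xi>))\<bar>
    \<le> (9 * ln_det_const CARD('n) (2 * ln (fact CARD('n) * K ^ CARD('n))) + 10 * CARD('n))
        * K ^ 6 * h * (1 + norm \<xi>)\<^sup>2"
proof -
  define N c where "N = real CARD('n)" and "c = ln_det_const CARD('n) (2 * ln (fact CARD('n) * K ^ CARD('n)))"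
  define y d g w where "y = X_star x \<xi>" and "d = X_star x \<xi> - x" and "g = h *\<^sub>R G (X_tilde x \<xi>)"
    and "w = 1 + norm \<xi>"
  define A where "A = matrix_inv (B x) ** (B y - B x)"
  have "c * norm A ^ 2 \<le> c * (9 * K ^ 6 * h * w\<^sup>2)"
    using abs_ln_abs_det_B_le[of x] norm_B_inv_mult_B_X_star_diff_power2_le[of x \<xi>]
    by (intro mult_left_mono) (simp_all add: A_def y_def w_def c_def ln_det_const_def)
  then have ln_det: "\<bar>ln (det (B y) / det (B x)) - trace A\<bar> \<le> 9 * c * K ^ 6 * h * w\<^sup>2"
    using abs_ln_det_ratio_sub_trace_le[where x=x and y=y] by (simp add: A_def c_def mult_ac)
  have lin: "\<bar>trace (matrix_inv (B x) ** (B y - B x - DB x d))\<bar> \<le> 9 * N * K ^ 6 * h * w\<^sup>2"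
  proof -
    have "\<bar>trace (matrix_inv (B x) ** (B y - B x - DB x d))\<bar> \<le> N * (K * (9 * K ^ 3 * h * w\<^sup>2))"
      using abs_trace_B_inv_mult_le[of x "B y - B x - DB x d"] norm_B_X_star_linearization_le[of x \<xi>] K_nonneg
      by (smt (verit) N_def d_def y_def w_def mult_left_mono of_nat_0_le_iff)
    also have "\<dots> = 9 * N * h * (K ^ 4 * w\<^sup>2)" by (simp add: eval_nat_numeral algebra_simps)
    also have "\<dots> \<le> 9 * N * h * (K ^ 6 * w\<^sup>2)"
      using K_power_mono[of 4 6 2 2 \<xi>] h_pos by (intro mult_left_mono) (simp_all add: N_def w_def)
    finally show ?thesis by (simp add: mult_ac)
  qed
  have drift: "\<bar>trace (matrix_inv (B x) ** DB x g)\<bar> \<le> N * K ^ 6 * h * w\<^sup>2"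
  proof -
    have "\<bar>trace (matrix_inv (B x) ** DB x g)\<bar> \<le> N * (K * (K\<^sup>2 * h))"
      using abs_trace_B_inv_mult_le[of x "DB x g"] norm_DB_drift_le[of x "X_tilde x \<xi>"] K_nonneg
      by (smt (verit) N_def g_def mult_left_mono of_nat_0_le_iff)
    also have "\<dots> = N * h * (K ^ 3 * w ^ 0)" by (simp add: eval_nat_numeral algebra_simps)
    also have "\<dots> \<le> N * h * (K ^ 6 * w\<^sup>2)"
      using K_power_mono[of 3 6 0 2 \<xi>] h_pos by (intro mult_left_mono) (simp_all add: N_def w_def)
    finally show ?thesis by (simp add: mult_ac)
  qed
  have "ln (det (B x) / det (B y))
      + sqrt (2 * h) / 2 * trace (matrix_inv (Mh B x) ** DMh B (\<lambda>z. blinfun_apply (DB z)) x (B x *v \<xi>))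
    = - (ln (det (B y) / det (B x)) - trace A) - trace (matrix_inv (B x) ** (B y - B x - DB x d))
      - trace (matrix_inv (B x) ** DB x g)"
    using invertible_det_nz[of "B x"] invertible_det_nz[of "B y"] B_invertible
    unfolding trace_DM_split A_def y_def d_def g_def by (simp add: ln_div)
  with ln_det lin drift show ?thesis
    unfolding y_def[symmetric] w_def[symmetric] by (simp add: c_def N_def algebra_simps)
qed

lemma abs_potential_remainder_le:
  "\<bar>U (X_star x \<xi>) - U x - sqrt (2 * h) * (gU x \<bullet> (B x *v \<xi>))\<bar> \<le> 10 * K ^ 3 * h * (1 + norm \<xi>)\<^sup>2"
proof -
  define d where "d = X_star x \<xi> - x"
  have "U (X_star x \<xi>) - U x - sqrt (2 * h) * (gU x \<bullet> (B x *v \<xi>))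
      = (U (X_star x \<xi>) - U x - gU x \<bullet> d) + h * (gU x \<bullet> G (X_tilde x \<xi>))"
    by (simp add: d_def X_star_sub_eq inner_add_right)
  moreover have "\<bar>U (X_star x \<xi>) - U x - gU x \<bullet> d\<bar> \<le> 9 * K ^ 3 * h * (1 + norm \<xi>)\<^sup>2"
    using abs_U_linearization_le[of "X_star x \<xi>" x] mult_left_mono[OF norm_X_star_sub_power2_le[of x \<xi>] K_nonneg]
    by (simp add: d_def eval_nat_numeral algebra_simps)
  moreover have "\<bar>h * (gU x \<bullet> G (X_tilde x \<xi>))\<bar> \<le> K ^ 3 * h * (1 + norm \<xi>)\<^sup>2"
  proof -
    have "\<bar>gU x \<bullet> G (X_tilde x \<xi>)\<bar> \<le> K * K"
      using Cauchy_Schwarz_ineq2 gU_bound G_bound by (smt (verit) mult_mono norm_ge_zero)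
    also have "\<dots> \<le> K ^ 3 * (1 + norm \<xi>)\<^sup>2"
      using K_power_mono[of 2 3 0 2 \<xi>] by (simp add: power2_eq_square)
    finally show ?thesis using h_pos by (simp add: abs_mult mult_left_mono mult_ac)
  qed
  ultimately show ?thesis by (simp add: algebra_simps)
qed

definition eta :: "real^'n \<Rightarrow> real^'n \<Rightarrow> real^'n" where
  "eta x \<xi> = matrix_inv (B (X_star x \<xi>)) *v (B x *v \<xi> + sqrt (2 * h) *\<^sub>R G (X_tilde x \<xi>))"

text \<open>
  With \<open>\<eta> = \<xi> + B(X1*)^-1 p\<close>, the kinetic term \<open>\<bar>\<eta>\<bar>^2/2 - \<bar>\<xi>\<bar>^2/2\<close> minus its counterpart in
  \<open>\<Gamma>_h\<close> becomes \<open>\<xi> \<bullet> (B(X1*)^-1 p - B(X0)^-1 q) + \<bar>B(X1*)^-1 p\<bar>^2 / 2\<close>; the point is that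
  \<open>p = O(\<surd>h)\<close> while \<open>p - q = O(h)\<close>.
\<close>

definition kinetic_p :: "real^'n \<Rightarrow> real^'n \<Rightarrow> real^'n" where
  "kinetic_p x \<xi> = sqrt (2 * h) *\<^sub>R G (X_tilde x \<xi>) - (B (X_star x \<xi>) - B x) *v \<xi>"

definition kinetic_q :: "real^'n \<Rightarrow> real^'n \<Rightarrow> real^'n" where
  "kinetic_q x \<xi> = sqrt (2 * h) *\<^sub>R G x - DB x (sqrt (2 * h) *\<^sub>R (B x *v \<xi>)) *v \<xi>"

lemma kinetic_identity:
  fixes x \<xi> :: "real^'n"
  defines "v \<equiv> transpose (matrix_inv (B x)) *v \<xi>"
  shows "(norm (eta x \<xi>))\<^sup>2 / 2 - (norm \<xi>)\<^sup>2 / 2 - sqrt (2 * h) * ((matrix_inv (Mh B x) *v G x) \<bullet> (B x *v \<xi>))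
      + sqrt (2 * h) / 2 * DMh3 B (\<lambda>z. blinfun_apply (DB z)) x (B x *v \<xi>) v v
    = \<xi> \<bullet> (matrix_inv (B (X_star x \<xi>)) *v kinetic_p x \<xi> - matrix_inv (B x) *v kinetic_q x \<xi>)
      + (norm (matrix_inv (B (X_star x \<xi>)) *v kinetic_p x \<xi>))\<^sup>2 / 2"
proof -
  define r where "r = matrix_inv (B (X_star x \<xi>)) *v kinetic_p x \<xi>"
  have "eta x \<xi> = \<xi> + r"
    by (simp add: eta_def r_def kinetic_p_def algebra_simps matrix_vector_mul_assoc
        matrix_inv_left[OF B_invertible])
  then have "(norm (eta x \<xi>))\<^sup>2 / 2 - (norm \<xi>)\<^sup>2 / 2 = \<xi> \<bullet> r + (norm r)\<^sup>2 / 2"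
    by (simp add: power2_norm_eq_inner inner_add_left inner_add_right inner_commute field_simps)
  moreover have "(matrix_inv (Mh B x) *v G x) \<bullet> (B x *v \<xi>) = \<xi> \<bullet> (matrix_inv (B x) *v G x)"
    unfolding Mh_def by (rule inner_inv_mult_transpose[OF B_invertible])
  moreover have "sqrt (2 * h) / 2 * DMh3 B (\<lambda>z. blinfun_apply (DB z)) x (B x *v \<xi>) v v
      = \<xi> \<bullet> (matrix_inv (B x) *v (DB x (sqrt (2 * h) *\<^sub>R (B x *v \<xi>)) *v \<xi>))"
    unfolding DMh3_def DMh_def v_def inner_inv_transpose_mult_sym[OF B_invertible]
    by (simp add: blinfun.scaleR_right matrix_vector_mult_scaleR flip: scaleR_matrix_vector_assoc)
  ultimately show ?thesis
    by (simp add: r_def kinetic_q_def algebra_simps)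
qed

lemma norm_kinetic_p_le: "norm (kinetic_p x \<xi>) \<le> 5 * K\<^sup>2 * sqrt h * (1 + norm \<xi>)\<^sup>2"
proof -
  define w where "w = 1 + norm \<xi>"
  have "norm \<xi> \<le> w" by (simp add: w_def)
  have "norm (sqrt (2 * h) *\<^sub>R G (X_tilde x \<xi>)) \<le> 2 * sqrt h * K"
    using mult_mono[OF sqrt_h_bounds(2) G_bound] h_pos by simp
  also have "\<dots> \<le> 2 * sqrt h * (K\<^sup>2 * w\<^sup>2)"
    using K_power_mono[of 1 2 0 2 \<xi>] h_pos by (intro mult_left_mono) (auto simp: w_def)
  finally have drift: "norm (sqrt (2 * h) *\<^sub>R G (X_tilde x \<xi>)) \<le> 2 * K\<^sup>2 * sqrt h * w\<^sup>2"
    by (simp add: mult_ac)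
  have "norm ((B (X_star x \<xi>) - B x) *v \<xi>) \<le> (3 * K\<^sup>2 * sqrt h * w) * w"
    using norm_B_X_star_diff_le[of x \<xi>] \<open>norm \<xi> \<le> w\<close> by (intro norm_matrix_vector_mult_le_of_le) (auto simp: w_def)
  moreover have "norm (kinetic_p x \<xi>)
      \<le> norm (sqrt (2 * h) *\<^sub>R G (X_tilde x \<xi>)) + norm ((B (X_star x \<xi>) - B x) *v \<xi>)"
    unfolding kinetic_p_def by (rule norm_triangle_ineq4)
  ultimately show ?thesis
    using drift by (simp add: w_def power2_eq_square algebra_simps)
qed

lemma norm_kinetic_p_sub_q_le:
  "norm (kinetic_p x \<xi> - kinetic_q x \<xi>) \<le> 12 * K ^ 3 * h * (1 + norm \<xi>) ^ 3"
proof -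
  define w d g where "w = 1 + norm \<xi>" and "d = X_star x \<xi> - x" and "g = h *\<^sub>R G (X_tilde x \<xi>)"
  have w: "1 \<le> w" "norm \<xi> \<le> w" by (simp_all add: w_def)
  have "kinetic_p x \<xi> - kinetic_q x \<xi> = sqrt (2 * h) *\<^sub>R (G (X_tilde x \<xi>) - G x)
      - (B (X_star x \<xi>) - B x - DB x d) *v \<xi> - DB x g *v \<xi>"
    unfolding kinetic_p_def kinetic_q_def d_def g_def X_star_sub_eq
    by (simp add: blinfun.add_right algebra_simps)
  then have "norm (kinetic_p x \<xi> - kinetic_q x \<xi>) \<le> sqrt (2 * h) * norm (G (X_tilde x \<xi>) - G x)
      + norm ((B (X_star x \<xi>) - B x - DB x d) *v \<xi>) + norm (DB x g *v \<xi>)"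
    using h_pos norm_triangle_ineq4[of "sqrt (2 * h) *\<^sub>R (G (X_tilde x \<xi>) - G x)
      - (B (X_star x \<xi>) - B x - DB x d) *v \<xi>" "DB x g *v \<xi>"]
      norm_triangle_ineq4[of "sqrt (2 * h) *\<^sub>R (G (X_tilde x \<xi>) - G x)" "(B (X_star x \<xi>) - B x - DB x d) *v \<xi>"]
    by simp
  moreover have "sqrt (2 * h) * norm (G (X_tilde x \<xi>) - G x) \<le> 2 * K\<^sup>2 * h * w"
  proof -
    have "sqrt (2 * h) * norm (G (X_tilde x \<xi>) - G x) \<le> 2 * sqrt h * (K * (K * sqrt h * w))"
      using norm_G_diff_le[of "X_tilde x \<xi>" x] mult_left_mono[OF norm_X_tilde_sub_le[of x \<xi>] K_nonneg] h_pos
      by (intro mult_mono sqrt_h_bounds(2)) (auto simp: w_def)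
    also have "\<dots> = 2 * K\<^sup>2 * (sqrt h * sqrt h) * w" by (simp only: power2_eq_square mult_ac)
    finally show ?thesis by (simp only: sqrt_h_bounds(3))
  qed
  moreover have "norm ((B (X_star x \<xi>) - B x - DB x d) *v \<xi>) \<le> 9 * K ^ 3 * h * w ^ 3"
    using norm_matrix_vector_mult_le_of_le[OF norm_B_X_star_linearization_le w(2)]
    by (simp add: d_def w_def power2_eq_square power3_eq_cube mult_ac)
  moreover have "norm (DB x g *v \<xi>) \<le> K\<^sup>2 * h * w"
    using norm_matrix_vector_mult_le_of_le[OF norm_DB_drift_le w(2)] by (simp add: g_def)
  moreover have "K\<^sup>2 * h * w \<le> K ^ 3 * h * w ^ 3"
    using mult_right_mono[OF K_power_mono[of 2 3 1 3 \<xi>], of h] h_pos by (simp add: w_def mult_ac)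
  ultimately show ?thesis
    unfolding w_def[symmetric] by linarith
qed

lemma abs_inner_kinetic_diff_le:
  "\<bar>\<xi> \<bullet> (matrix_inv (B (X_star x \<xi>)) *v kinetic_p x \<xi> - matrix_inv (B x) *v kinetic_q x \<xi>)\<bar>
    \<le> 27 * K ^ 6 * h * (1 + norm \<xi>) ^ 4"
proof -
  define w p q where "w = 1 + norm \<xi>" and "p = kinetic_p x \<xi>" and "q = kinetic_q x \<xi>"
  define Bs Bx where "Bs = matrix_inv (B (X_star x \<xi>))" and "Bx = matrix_inv (B x)"
  have w: "1 \<le> w" "norm \<xi> \<le> w" by (simp_all add: w_def)
  have "norm ((Bs - Bx) *v p) \<le> (K ^ 3 * (3 * K * sqrt h * w)) * (5 * K\<^sup>2 * sqrt h * w\<^sup>2)"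
    using norm_B_inv_diff_le[of "X_star x \<xi>" x] mult_left_mono[OF norm_X_star_sub_le[of x \<xi>], of "K ^ 3"]
      K_nonneg norm_kinetic_p_le[of x \<xi>]
    by (intro norm_matrix_vector_mult_le_of_le) (simp_all add: Bs_def Bx_def p_def w_def)
  also have "\<dots> = 15 * K ^ 6 * (sqrt h * sqrt h) * w ^ 3"
    by (simp add: eval_nat_numeral algebra_simps)
  finally have lip: "norm ((Bs - Bx) *v p) \<le> 15 * K ^ 6 * h * w ^ 3"
    by (simp only: sqrt_h_bounds(3))
  have "norm (Bx *v (p - q)) \<le> K * (12 * K ^ 3 * h * w ^ 3)"
    unfolding Bx_def p_def q_def w_def by (intro norm_matrix_vector_mult_le_of_le B_inv_bound norm_kinetic_p_sub_q_le)
  also have "\<dots> = 12 * h * (K ^ 4 * w ^ 3)"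
    by (simp add: eval_nat_numeral algebra_simps)
  also have "\<dots> \<le> 12 * h * (K ^ 6 * w ^ 3)"
    using K_power_mono[of 4 6 3 3 \<xi>] h_pos by (intro mult_left_mono) (simp_all add: w_def)
  finally have lin: "norm (Bx *v (p - q)) \<le> 12 * h * (K ^ 6 * w ^ 3)" .
  have "Bs *v p - Bx *v q = (Bs - Bx) *v p + Bx *v (p - q)" by (simp add: algebra_simps)
  then have "\<bar>\<xi> \<bullet> (Bs *v p - Bx *v q)\<bar> \<le> w * (norm ((Bs - Bx) *v p) + norm (Bx *v (p - q)))"
    using Cauchy_Schwarz_ineq2[of \<xi> "Bs *v p - Bx *v q"] norm_triangle_ineq[of "(Bs - Bx) *v p" "Bx *v (p - q)"] w
    by (smt (verit) mult_mono norm_ge_zero)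
  also have "\<dots> \<le> 27 * K ^ 6 * h * w ^ 4"
    using mult_left_mono[OF add_mono[OF lip lin], of w] w by (simp add: eval_nat_numeral algebra_simps)
  finally show ?thesis by (simp add: Bs_def Bx_def p_def q_def w_def)
qed

lemma norm_B_inv_kinetic_p_power2_le:
  "(norm (matrix_inv (B (X_star x \<xi>)) *v kinetic_p x \<xi>))\<^sup>2 \<le> 25 * K ^ 6 * h * (1 + norm \<xi>) ^ 4"
proof -
  define w where "w = 1 + norm \<xi>"
  have "norm (matrix_inv (B (X_star x \<xi>)) *v kinetic_p x \<xi>) \<le> K * (5 * K\<^sup>2 * sqrt h * w\<^sup>2)"
    unfolding w_def by (intro norm_matrix_vector_mult_le_of_le B_inv_bound norm_kinetic_p_le)
  then have "(norm (matrix_inv (B (X_star x \<xi>)) *v kinetic_p x \<xi>))\<^sup>2 \<le> (K * (5 * K\<^sup>2 * sqrt h * w\<^sup>2))\<^sup>2"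
    by (rule power_mono) simp
  also have "\<dots> = 25 * K ^ 6 * (sqrt h * sqrt h) * w ^ 4"
    by (simp add: eval_nat_numeral algebra_simps)
  finally show ?thesis by (simp only: sqrt_h_bounds(3) w_def)
qed

lemma abs_kinetic_remainder_le:
  fixes x \<xi> :: "real^'n"
  defines "v \<equiv> transpose (matrix_inv (B x)) *v \<xi>"
  shows "\<bar>(norm (eta x \<xi>))\<^sup>2 / 2 - (norm \<xi>)\<^sup>2 / 2 - sqrt (2 * h) * ((matrix_inv (Mh B x) *v G x) \<bullet> (B x *v \<xi>))
      + sqrt (2 * h) / 2 * DMh3 B (\<lambda>z. blinfun_apply (DB z)) x (B x *v \<xi>) v v\<bar>
    \<le> 40 * K ^ 6 * h * (1 + norm \<xi>) ^ 4"
proof -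
  define a r where "a = \<xi> \<bullet> (matrix_inv (B (X_star x \<xi>)) *v kinetic_p x \<xi> - matrix_inv (B x) *v kinetic_q x \<xi>)"
    and "r = matrix_inv (B (X_star x \<xi>)) *v kinetic_p x \<xi>"
  have "\<bar>a + (norm r)\<^sup>2 / 2\<bar> \<le> \<bar>a\<bar> + (norm r)\<^sup>2 / 2"
    using abs_triangle_ineq[of a "(norm r)\<^sup>2 / 2"] by simp
  also have "\<dots> \<le> 27 * K ^ 6 * h * (1 + norm \<xi>) ^ 4 + 25 * K ^ 6 * h * (1 + norm \<xi>) ^ 4 / 2"
    using abs_inner_kinetic_diff_le[of \<xi> x] norm_B_inv_kinetic_p_power2_le[of x \<xi>]
    unfolding a_def r_def by linarith
  also have "\<dots> \<le> 40 * K ^ 6 * h * (1 + norm \<xi>) ^ 4"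
    using K_nonneg h_pos by simp
  finally show ?thesis
    unfolding v_def kinetic_identity a_def r_def .
qed

definition log_acceptance :: "real \<Rightarrow> real^'n \<Rightarrow> real^'n \<Rightarrow> real" where
  "log_acceptance \<beta> x \<xi> = ln (det (B x) / det (B (X_star x \<xi>)))
    - \<beta> * ((norm (eta x \<xi>))\<^sup>2 / 2 - (norm \<xi>)\<^sup>2 / 2 + U (X_star x \<xi>) - U x)"

lemma alpha_h_eq_min_exp_log_acceptance:
  "alpha_h \<beta> U G B h x \<xi> = min 1 (exp (log_acceptance \<beta> x \<xi>))"
proof -
  define y where "y = X_star x \<xi>"
  have pos: "0 < det (B x) / det (B y)"
    using det_B_mult_pos[of x y] by (simp add: zero_less_mult_iff zero_less_divide_iff)
  have "alpha_h \<beta> U G B h x \<xi>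
      = min 1 (det (B x) / det (B y) * exp (- \<beta> * ((norm (eta x \<xi>))\<^sup>2 / 2 - (norm \<xi>)\<^sup>2 / 2 + U y - U x)))"
    unfolding alpha_h_def Let_def y_def eta_def X_star_def X_tilde_def by (rule refl)
  also have "det (B x) / det (B y) * exp (- \<beta> * ((norm (eta x \<xi>))\<^sup>2 / 2 - (norm \<xi>)\<^sup>2 / 2 + U y - U x))
      = exp (log_acceptance \<beta> x \<xi>)"
    using pos
    unfolding log_acceptance_def y_def[symmetric] diff_conv_add_uminus mult_minus_left[symmetric] exp_add
    by simp
  finally show ?thesis .
qed

lemma abs_log_acceptance_add_Gamma_h_le:
  assumes "0 < \<beta>"
  shows "\<bar>log_acceptance \<beta> x \<xi> + \<beta> * Gamma_h \<beta> gU G B (\<lambda>z. blinfun_apply (DB z)) h x \<xi>\<bar>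
    \<le> acceptance_const CARD('n) K \<beta> * h * (1 + norm \<xi>) ^ 4"
proof -
  define y u v w where "y = X_star x \<xi>" and "u = B x *v \<xi>"
    and "v = transpose (matrix_inv (B x)) *v \<xi>" and "w = 1 + norm \<xi>"
  define T D3 where "T = trace (matrix_inv (Mh B x) ** DMh B (\<lambda>z. blinfun_apply (DB z)) x u)"
    and "D3 = DMh3 B (\<lambda>z. blinfun_apply (DB z)) x u v v"
  define c where "c = 9 * ln_det_const CARD('n) (2 * ln (fact CARD('n) * K ^ CARD('n))) + 10 * CARD('n)"
  define E_det where "E_det = ln (det (B x) / det (B y)) + sqrt (2 * h) / 2 * T"
  define E_kin where "E_kin = (norm (eta x \<xi>))\<^sup>2 / 2 - (norm \<xi>)\<^sup>2 / 2
    - sqrt (2 * h) * ((matrix_inv (Mh B x) *v G x) \<bullet> u) + sqrt (2 * h) / 2 * D3"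
  define E_pot where "E_pot = U y - U x - sqrt (2 * h) * (gU x \<bullet> u)"
  have "Gamma_h \<beta> gU G B (\<lambda>z. blinfun_apply (DB z)) h x \<xi> = sqrt (2 * h) * (gU x \<bullet> u)
      + sqrt (2 * h) * ((matrix_inv (Mh B x) *v G x) \<bullet> u) + sqrt (2 * h) * (inverse \<beta> / 2) * T
      - sqrt (2 * h) * (1 / 2) * D3"
    unfolding Gamma_h_def T_def D3_def u_def v_def by (simp only: inner_add_left distrib_left)
  then have split: "log_acceptance \<beta> x \<xi> + \<beta> * Gamma_h \<beta> gU G B (\<lambda>z. blinfun_apply (DB z)) h x \<xi>
      = E_det - \<beta> * E_kin - \<beta> * E_pot"
    unfolding log_acceptance_def E_det_def E_kin_def E_pot_def y_def using assms by (simp add: field_simps)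
  have det: "\<bar>E_det\<bar> \<le> c * K ^ 6 * h * w ^ 4"
  proof -
    have "0 \<le> c * K ^ 6 * h"
      using abs_ln_abs_det_B_le[of x] K_nonneg h_pos by (simp add: c_def ln_det_const_def)
    from mult_left_mono[OF power_increasing[of 2 4 w] this] abs_log_det_remainder_le[of x \<xi>]
    show ?thesis by (simp add: E_det_def T_def c_def u_def y_def w_def)
  qed
  have kin: "\<bar>E_kin\<bar> \<le> 40 * K ^ 6 * h * w ^ 4"
    unfolding E_kin_def D3_def v_def u_def w_def by (rule abs_kinetic_remainder_le)
  have pot: "\<bar>E_pot\<bar> \<le> 10 * K ^ 6 * h * w ^ 4"
  proof -
    have "10 * h * (K ^ 3 * w\<^sup>2) \<le> 10 * h * (K ^ 6 * w ^ 4)"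
      unfolding w_def by (rule mult_left_mono[OF K_power_mono]) (use h_pos in auto)
    then show ?thesis
      using abs_potential_remainder_le[of x \<xi>] by (simp add: E_pot_def u_def y_def w_def mult_ac)
  qed
  have "\<bar>E_det - \<beta> * E_kin - \<beta> * E_pot\<bar> \<le> \<bar>E_det\<bar> + \<beta> * \<bar>E_kin\<bar> + \<beta> * \<bar>E_pot\<bar>"
    using abs_triangle_ineq4[of "E_det - \<beta> * E_kin" "\<beta> * E_pot"] abs_triangle_ineq4[of E_det "\<beta> * E_kin"]
      abs_mult[of \<beta> E_kin] abs_mult[of \<beta> E_pot] abs_of_pos[OF assms]
    by linarith
  also have "\<dots> \<le> c * K ^ 6 * h * w ^ 4 + \<beta> * (40 * K ^ 6 * h * w ^ 4) + \<beta> * (10 * K ^ 6 * h * w ^ 4)"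
    using assms det kin pot by (intro add_mono mult_left_mono) auto
  also have "\<dots> = acceptance_const CARD('n) K \<beta> * h * (1 + norm \<xi>) ^ 4"
    by (simp add: acceptance_const_def c_def w_def algebra_simps)
  finally show ?thesis unfolding split .
qed

lemma abs_alpha_h_sub_alpha_tilde_h_le:
  assumes "0 < \<beta>"
  shows "\<bar>alpha_h \<beta> U G B h x \<xi> - alpha_tilde_h \<beta> gU G B (\<lambda>z. blinfun_apply (DB z)) h x \<xi>\<bar>
    \<le> acceptance_const CARD('n) K \<beta> * h * (1 + norm \<xi>) ^ 4"
  unfolding alpha_h_eq_min_exp_log_acceptance alpha_tilde_h_def
  using abs_min_one_exp_diff_le[of "log_acceptance \<beta> x \<xi>" "- \<beta> * Gamma_h \<beta> gU G B (\<lambda>z. blinfun_apply (DB z)) h x \<xi>"]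
    abs_log_acceptance_add_Gamma_h_le[OF assms, of x \<xi>]
  by simp

end

section \<open>The Gaussian fourth moment and the main theorem\<close>

lemma nn_integral_exp_neg_square_finite:
  fixes c :: real assumes "0 < c"
  shows "(\<integral>\<^sup>+ t. ennreal (exp (- c * t\<^sup>2)) \<partial>lborel) < \<infinity>"
proof -
  define \<sigma> where "\<sigma> = sqrt (1 / (2 * c))"
  have "0 < \<sigma>" using assms by (simp add: \<sigma>_def)
  have "exp (- c * t\<^sup>2) = sqrt (2 * pi * \<sigma>\<^sup>2) * normal_density 0 \<sigma> t" for t
    using assms \<open>0 < \<sigma>\<close> by (simp add: normal_density_def \<sigma>_def field_simps)
  then have "(\<integral>\<^sup>+ t. ennreal (exp (- c * t\<^sup>2)) \<partial>lborel)
      = ennreal (sqrt (2 * pi * \<sigma>\<^sup>2)) * (\<integral>\<^sup>+ t. ennreal (normal_density 0 \<sigma> t) \<partial>lborel)"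
    by (simp add: ennreal_mult' nn_integral_cmult)
  also have "\<dots> < \<infinity>"
    using \<open>0 < \<sigma>\<close> by (simp add: nn_integral_eq_integral ennreal_mult_less_top)
  finally show ?thesis .
qed

lemma nn_integral_exp_neg_norm_square_finite:
  fixes c :: real assumes "0 < c"
  shows "(\<integral>\<^sup>+ x. ennreal (exp (- c * (norm (x :: 'a :: euclidean_space))\<^sup>2)) \<partial>lborel) < \<infinity>"
proof -
  have "ennreal (exp (- c * (norm x)\<^sup>2)) = (\<Prod>b\<in>Basis. ennreal (exp (- c * (x \<bullet> b)\<^sup>2)))" for x :: 'a
  proof -
    have "(norm x)\<^sup>2 = (\<Sum>b\<in>Basis. (x \<bullet> b) * (x \<bullet> b))"
      unfolding power2_norm_eq_inner by (rule euclidean_inner)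
    then have "- c * (norm x)\<^sup>2 = (\<Sum>b\<in>Basis. - c * (x \<bullet> b)\<^sup>2)"
      by (simp add: power2_eq_square sum_distrib_left)
    then show ?thesis by (simp add: exp_sum prod_ennreal)
  qed
  then have "(\<integral>\<^sup>+ x. ennreal (exp (- c * (norm (x :: 'a))\<^sup>2)) \<partial>lborel)
      = (\<Prod>b\<in>(Basis :: 'a set). \<integral>\<^sup>+ t. ennreal (exp (- c * t\<^sup>2)) \<partial>lborel)"
    using nn_integral_lborel_prod[where f="\<lambda>b t. ennreal (exp (- c * t\<^sup>2))" and 'a='a] by simp
  also have "\<dots> < \<infinity>"
    using nn_integral_exp_neg_square_finite[OF assms] by (simp add: power_less_top_ennreal)
  finally show ?thesis .
qed

lemma one_plus_power4_le_exp:
  fixes \<beta> r :: real assumes "0 < \<beta>" "0 \<le> r"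
  shows "(1 + r) ^ 4 \<le> 8 * (1 + 64 / \<beta>\<^sup>2) * exp (\<beta> * r\<^sup>2 / 4)"
proof -
  have square: "(1 + q)\<^sup>2 \<le> 2 * (1 + q\<^sup>2)" for q :: real
    using zero_le_power2[of "1 - q"] by (simp add: power2_eq_square algebra_simps)
  define y where "y = \<beta> * r\<^sup>2 / 4"
  have "0 \<le> y" using assms by (simp add: y_def)
  have "y / 2 \<le> exp (y / 2)" using exp_ge_add_one_self[of "y / 2"] by linarith
  then have "(y / 2)\<^sup>2 \<le> (exp (y / 2))\<^sup>2" using \<open>0 \<le> y\<close> by (intro power_mono) auto
  then have "y\<^sup>2 \<le> 4 * exp y" by (simp add: power_divide flip: exp_double)
  moreover have "r ^ 4 = 16 / \<beta>\<^sup>2 * y\<^sup>2"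
    using assms by (simp add: y_def field_simps flip: power_mult)
  ultimately have r4: "r ^ 4 \<le> 64 / \<beta>\<^sup>2 * exp y"
    using mult_left_mono[of "y\<^sup>2" "4 * exp y" "16 / \<beta>\<^sup>2"] by simp
  have "(1 + r) ^ 4 = ((1 + r)\<^sup>2)\<^sup>2" by simp
  also have "\<dots> \<le> (2 * (1 + r\<^sup>2))\<^sup>2" using square[of r] by (intro power_mono) auto
  also have "\<dots> = 4 * (1 + r\<^sup>2)\<^sup>2" by (subst power_mult_distrib) simp
  also have "\<dots> \<le> 8 * (1 + r ^ 4)" using square[of "r\<^sup>2"] by (simp flip: power_mult)
  also have "\<dots> \<le> 8 * (exp y + 64 / \<beta>\<^sup>2 * exp y)"
    by (intro mult_left_mono add_mono r4) (use \<open>0 \<le> y\<close> in auto)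
  finally show ?thesis by (simp add: y_def algebra_simps)
qed

lemma nn_integral_gauss_moment4_finite:
  assumes "0 < \<beta>"
  shows "(\<integral>\<^sup>+ \<xi>. ennreal ((1 + norm (\<xi> :: real^'n)) ^ 4) \<partial>gauss \<beta>) < \<infinity>"
proof -
  define c where "c = (\<beta> / (2 * pi)) powr (real CARD('n) / 2) * (8 * (1 + 64 / \<beta>\<^sup>2))"
  have "0 \<le> c" by (simp add: c_def)
  have "gauss_pdf \<beta> \<xi> * (1 + norm \<xi>) ^ 4 \<le> c * exp (- (\<beta> / 4) * (norm \<xi>)\<^sup>2)" for \<xi> :: "real^'n"
  proof -
    have "gauss_pdf \<beta> \<xi> * (1 + norm \<xi>) ^ 4
        \<le> (\<beta> / (2 * pi)) powr (real CARD('n) / 2) * exp (- \<beta> * (norm \<xi>)\<^sup>2 / 2)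
          * (8 * (1 + 64 / \<beta>\<^sup>2) * exp (\<beta> * (norm \<xi>)\<^sup>2 / 4))"
      unfolding gauss_pdf_def using one_plus_power4_le_exp[OF assms norm_ge_zero] by (intro mult_left_mono) auto
    also have "\<dots> = c * (exp (- \<beta> * (norm \<xi>)\<^sup>2 / 2) * exp (\<beta> * (norm \<xi>)\<^sup>2 / 4))"
      by (simp add: c_def)
    also have "exp (- \<beta> * (norm \<xi>)\<^sup>2 / 2) * exp (\<beta> * (norm \<xi>)\<^sup>2 / 4) = exp (- (\<beta> / 4) * (norm \<xi>)\<^sup>2)"
      unfolding exp_add[symmetric] by simp
    finally show ?thesis .
  qed
  then have "(\<integral>\<^sup>+ \<xi>. ennreal ((1 + norm (\<xi> :: real^'n)) ^ 4) \<partial>gauss \<beta>)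
      \<le> (\<integral>\<^sup>+ \<xi>. ennreal c * ennreal (exp (- (\<beta> / 4) * (norm (\<xi> :: real^'n))\<^sup>2)) \<partial>lborel)"
    unfolding gauss_def using \<open>0 \<le> c\<close>
    by (subst nn_integral_density) (auto simp: gauss_pdf_def intro!: nn_integral_mono
        simp flip: ennreal_mult ennreal_mult' intro: ennreal_leI)
  also have "\<dots> < \<infinity>"
    using nn_integral_exp_neg_norm_square_finite[of "\<beta> / 4", where 'a="real^'n"] assms
    by (simp add: nn_integral_cmult ennreal_mult_less_top)
  finally show ?thesis .
qed

lemma nn_integral_gauss_le_moment4:
  fixes f :: "real^'n \<Rightarrow> real"
  assumes "\<And>\<xi>. \<bar>f \<xi>\<bar> \<le> c * (1 + norm \<xi>) ^ 4" "0 \<le> c"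
  shows "(\<integral>\<^sup>+ \<xi>. ennreal \<bar>f \<xi>\<bar> \<partial>gauss \<beta>)
    \<le> ennreal c * (\<integral>\<^sup>+ \<xi>. ennreal ((1 + norm (\<xi> :: real^'n)) ^ 4) \<partial>gauss \<beta>)"
proof -
  have "(\<integral>\<^sup>+ \<xi>. ennreal \<bar>f \<xi>\<bar> \<partial>gauss \<beta>) \<le> (\<integral>\<^sup>+ \<xi>. ennreal c * ennreal ((1 + norm (\<xi> :: real^'n)) ^ 4) \<partial>gauss \<beta>)"
    by (intro nn_integral_mono) (simp add: assms ennreal_leI flip: ennreal_mult)
  also have "\<dots> = ennreal c * (\<integral>\<^sup>+ \<xi>. ennreal ((1 + norm (\<xi> :: real^'n)) ^ 4) \<partial>gauss \<beta>)"
    by (rule nn_integral_cmult) (simp add: gauss_def)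
  finally show ?thesis .
qed

lemma acceptance_const_nonneg: "1 \<le> K \<Longrightarrow> 0 \<le> \<beta> \<Longrightarrow> 0 \<le> acceptance_const n K \<beta>"
  using fact_ge_1[of n, where 'a=real] one_le_power[of K n] mult_mono[of 1 "fact n" 1 "K ^ n"]
  by (simp add: acceptance_const_def ln_det_const_def)

lemma proposal_bounds_of_uniform_bounds:
  fixes U :: "real^'n \<Rightarrow> real" and gU :: "real^'n \<Rightarrow> real^'n"
    and HU :: "real^'n \<Rightarrow> real^'n \<Rightarrow> real^'n"
    and G :: "real \<Rightarrow> real^'n \<Rightarrow> real^'n" and DG :: "real \<Rightarrow> real^'n \<Rightarrow> real^'n \<Rightarrow> real^'n"
    and Bh :: "real \<Rightarrow> real^'n \<Rightarrow> real^'n^'n"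
    and DB :: "real \<Rightarrow> real^'n \<Rightarrow> (real^'n) \<Rightarrow>\<^sub>L (real^'n^'n)"
    and D2B :: "real \<Rightarrow> real^'n \<Rightarrow> real^'n \<Rightarrow> ((real^'n) \<Rightarrow>\<^sub>L (real^'n^'n))"
  assumes U_deriv: "\<And>x. (U has_derivative (\<lambda>v. gU x \<bullet> v)) (at x)"
    and U_deriv2: "\<And>x. (gU has_derivative HU x) (at x)"
    and U_bdd: "\<exists>K. \<forall>x. norm (gU x) \<le> K \<and> onorm (HU x) \<le> K"
    and G_bdd: "\<exists>h0>0. \<exists>K. \<forall>h\<in>{0<..<h0}. \<forall>x.
        norm (G h x) \<le> K \<and> (G h has_derivative DG h x) (at x) \<and> onorm (DG h x) \<le> K"
    and B_bdd: "\<exists>h0>0. \<exists>K. \<forall>h\<in>{0<..<h0}. \<forall>x.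
        invertible (Bh h x) \<and> norm (Bh h x) \<le> K \<and> norm (matrix_inv (Bh h x)) \<le> K
      \<and> (Bh h has_derivative blinfun_apply (DB h x)) (at x) \<and> norm (DB h x) \<le> K
      \<and> (DB h has_derivative D2B h x) (at x) \<and> onorm (D2B h x) \<le> K"
  shows "\<exists>K h1. 1 \<le> K \<and> 0 < h1 \<and> (\<forall>h\<in>{0<..<h1}.
    proposal_bounds U gU HU (G h) (DG h) (Bh h) (DB h) (D2B h) h K)"
proof -
  obtain KU where KU: "\<And>x. norm (gU x) \<le> KU \<and> onorm (HU x) \<le> KU" using U_bdd by blast
  obtain hG KG where "0 < hG" and KG: "\<And>h x. h \<in> {0<..<hG} \<Longrightarrow>
      norm (G h x) \<le> KG \<and> (G h has_derivative DG h x) (at x) \<and> onorm (DG h x) \<le> KG"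
    using G_bdd by blast
  obtain hB KB where "0 < hB" and KB: "\<And>h x. h \<in> {0<..<hB} \<Longrightarrow>
      invertible (Bh h x) \<and> norm (Bh h x) \<le> KB \<and> norm (matrix_inv (Bh h x)) \<le> KB
      \<and> (Bh h has_derivative blinfun_apply (DB h x)) (at x) \<and> norm (DB h x) \<le> KB
      \<and> (DB h has_derivative D2B h x) (at x) \<and> onorm (D2B h x) \<le> KB"
    using B_bdd by blast
  define K where "K = max 1 (max KU (max KG KB))"
  have "proposal_bounds U gU HU (G h) (DG h) (Bh h) (DB h) (D2B h) h K"
    if "h \<in> {0<..<min 1 (min hG hB)}" for h
    using that U_deriv U_deriv2 KU KG[of h] KB[of h]
    by unfold_locales (auto simp: K_def le_max_iff_disj)
  then show ?thesis
    using \<open>0 < hG\<close> \<open>0 < hB\<close> by (intro exI[of _ K] exI[of _ "min 1 (min hG hB)"]) (auto simp: K_def)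
qed

theorem lemma8p1:
  fixes U :: "real^'n \<Rightarrow> real" and gU :: "real^'n \<Rightarrow> real^'n"
    and HU :: "real^'n \<Rightarrow> real^'n \<Rightarrow> real^'n"
    and \<beta> :: real
    and G :: "real \<Rightarrow> real^'n \<Rightarrow> real^'n" and DG :: "real \<Rightarrow> real^'n \<Rightarrow> real^'n \<Rightarrow> real^'n"
    and Bh :: "real \<Rightarrow> real^'n \<Rightarrow> real^'n^'n"
    and DB :: "real \<Rightarrow> real^'n \<Rightarrow> (real^'n) \<Rightarrow>\<^sub>L (real^'n^'n)"
    and D2B :: "real \<Rightarrow> real^'n \<Rightarrow> real^'n \<Rightarrow> ((real^'n) \<Rightarrow>\<^sub>L (real^'n^'n))"
    and B :: "real^'n \<Rightarrow> real^'n^'n"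
  assumes beta_pos: "\<beta> > 0"
    and U_deriv: "\<And>x. (U has_derivative (\<lambda>v. gU x \<bullet> v)) (at x)"
    and U_deriv2: "\<And>x. (gU has_derivative HU x) (at x)"
    and U_bdd: "\<exists>K. \<forall>x. norm (gU x) \<le> K \<and> onorm (HU x) \<le> K"
    and G_bdd: "\<exists>h0>0. \<exists>K. \<forall>h\<in>{0<..<h0}. \<forall>x.
        norm (G h x) \<le> K \<and> (G h has_derivative DG h x) (at x) \<and> onorm (DG h x) \<le> K"
    and B_bdd: "\<exists>h0>0. \<exists>K. \<forall>h\<in>{0<..<h0}. \<forall>x.
        invertible (Bh h x) \<and> norm (Bh h x) \<le> K \<and> norm (matrix_inv (Bh h x)) \<le> K
      \<and> (Bh h has_derivative blinfun_apply (DB h x)) (at x) \<and> norm (DB h x) \<le> K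
      \<and> (DB h has_derivative D2B h x) (at x) \<and> onorm (D2B h x) \<le> K"
    and B_rel: "\<exists>Cm :: real^'n \<Rightarrow> real^'n^'n. \<exists>DC. \<exists>K. \<exists>h0>0.
        (\<forall>x. norm (Cm x) \<le> K \<and> (Cm has_derivative DC x) (at x) \<and> onorm (DC x) \<le> K)
      \<and> (\<forall>h\<in>{0<..<h0}. \<forall>x. Bh h x ** transpose (Bh h x) = B x ** transpose (B x) + sqrt h *\<^sub>R Cm x)"
  shows "\<exists>C>0. \<exists>h0>0. \<forall>h\<in>{0<..<h0}. \<forall>X0.
    (\<integral>\<^sup>+ \<xi>. ennreal \<bar>alpha_h \<beta> U (G h) (Bh h) h X0 \<xi>
        - alpha_tilde_h \<beta> gU (G h) (Bh h) (\<lambda>x. blinfun_apply (DB h x)) h X0 \<xi>\<bar> \<partial>gauss \<beta>)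
      \<le> ennreal (C * h)"
proof -
  obtain K h1 where "1 \<le> K" "0 < h1"
    and bounds: "\<forall>h\<in>{0<..<h1}. proposal_bounds U gU HU (G h) (DG h) (Bh h) (DB h) (D2B h) h K"
    using proposal_bounds_of_uniform_bounds[OF U_deriv U_deriv2 U_bdd G_bdd B_bdd] by (elim exE conjE) (rule that)
  obtain M where "0 \<le> M" and M: "(\<integral>\<^sup>+ \<xi>. ennreal ((1 + norm (\<xi> :: real^'n)) ^ 4) \<partial>gauss \<beta>) = ennreal M"
    using nn_integral_gauss_moment4_finite[OF beta_pos] by (auto simp: less_top_ennreal)
  define A where "A = acceptance_const CARD('n) K \<beta>"
  have "0 \<le> A" using acceptance_const_nonneg[OF \<open>1 \<le> K\<close>] beta_pos by (simp add: A_def)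
  have "(\<integral>\<^sup>+ \<xi>. ennreal \<bar>alpha_h \<beta> U (G h) (Bh h) h X0 \<xi>
        - alpha_tilde_h \<beta> gU (G h) (Bh h) (\<lambda>x. blinfun_apply (DB h x)) h X0 \<xi>\<bar> \<partial>gauss \<beta>)
      \<le> ennreal ((A * M + 1) * h)" if "h \<in> {0<..<h1}" for h X0
  proof -
    interpret proposal_bounds U gU HU "G h" "DG h" "Bh h" "DB h" "D2B h" h K using bounds that by blast
    have "(\<integral>\<^sup>+ \<xi>. ennreal \<bar>alpha_h \<beta> U (G h) (Bh h) h X0 \<xi>
        - alpha_tilde_h \<beta> gU (G h) (Bh h) (\<lambda>x. blinfun_apply (DB h x)) h X0 \<xi>\<bar> \<partial>gauss \<beta>)
      \<le> ennreal (A * h) * ennreal M"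
      unfolding M[symmetric] using abs_alpha_h_sub_alpha_tilde_h_le[OF beta_pos] \<open>0 \<le> A\<close> h_pos
      by (intro nn_integral_gauss_le_moment4) (simp_all add: A_def)
    also have "\<dots> \<le> ennreal ((A * M + 1) * h)"
      using \<open>0 \<le> A\<close> \<open>0 \<le> M\<close> h_pos by (simp add: algebra_simps ennreal_leI flip: ennreal_mult)
    finally show ?thesis .
  qed
  moreover have "0 < A * M + 1" using \<open>0 \<le> A\<close> \<open>0 \<le> M\<close> by (simp add: add_nonneg_pos)
  ultimately show ?thesis using \<open>0 < h1\<close> by blast
qed

end
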